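(* Let $\varphi$ be a metric-compatible function and $T\in\mathrm{Aut}(X,\mu)$ aperiodic. Then $[T]_\varphi$ is a subgroup of $\mathrm{Aut}(X,\mu)$, and $d_{\varphi,T}$ restricted to $[T]_\varphi$ is a complete, separable, right-invariant metric (i.e. $d_{\varphi,T}(UW,VW)=d_{\varphi,T}(U,V)$ for all $U,V,W\in[T]_\varphi$) whose induced topology is a group topology. In particular $[T]_\varphi$ is a Polish group.
   Context: $(X,\mu)$ is a standard atomless probability space and $\mathrm{Aut}(X,\mu)$ the group of measure-preserving transformations modulo null sets. For aperiodic $T$, $[T]$ is the set of $U\in\mathrm{Aut}(X,\mu)$ with $U(x)=T^{c_U(x)}(x)$ a.e. for a measurable $c_U:X\to\mathbb Z$ (the $T$-cocycle). $\varphi:\mathbb R_+\to\mathbb R_+$ is metric-compatible if it is subadditive, non-decreasing, $\varphi(0)=0$ and $\varphi(t)>0$ for $t>0$. $[T]_\varphi=\{U\in[T]:\int_X\varphi(|c_U|)d\mu<\infty\}$ and $d_{\varphi,T}(U,V)=\int_X\varphi(|c_U(x)-c_V(x)|)d\mu$. *)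

theory Defs
  imports "HOL-Probability.Probability"
begin

definition atomless :: "'a measure \<Rightarrow> bool" where
  "atomless M \<longleftrightarrow> (\<forall>A\<in>sets M. emeasure M A > 0 \<longrightarrow>
      (\<exists>B\<in>sets M. B \<subseteq> A \<and> 0 < emeasure M B \<and> emeasure M B < emeasure M A))"

definition std_atomless_prob :: "'a::polish_space measure \<Rightarrow> bool" where
  "std_atomless_prob M \<longleftrightarrow> prob_space M \<and> sets M = sets borel \<and> atomless M"

text \<open>Elements of Aut(X,mu) are represented by such bijections; two representatives
  denote the same element iff they agree almost everywhere (aut_eq).\<close>

definition aut :: "'a measure \<Rightarrow> ('a \<Rightarrow> 'a) \<Rightarrow> bool" where
  "aut M U \<longleftrightarrow> bij U \<and> U \<in> measurable M M \<and> inv U \<in> measurable M M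
     \<and> distr M M U = M"

definition aut_eq :: "'a measure \<Rightarrow> ('a \<Rightarrow> 'a) \<Rightarrow> ('a \<Rightarrow> 'a) \<Rightarrow> bool" where
  "aut_eq M U V \<longleftrightarrow> (AE x in M. U x = V x)"

definition tpow :: "('a \<Rightarrow> 'a) \<Rightarrow> int \<Rightarrow> 'a \<Rightarrow> 'a" where
  "tpow T k = (if k \<ge> 0 then T ^^ nat k else inv T ^^ nat (- k))"

definition aperiodic :: "'a measure \<Rightarrow> ('a \<Rightarrow> 'a) \<Rightarrow> bool" where
  "aperiodic M T \<longleftrightarrow> (\<forall>n::nat. n > 0 \<longrightarrow> (AE x in M. (T ^^ n) x \<noteq> x))"

definition is_cocycle :: "'a measure \<Rightarrow> ('a \<Rightarrow> 'a) \<Rightarrow> ('a \<Rightarrow> 'a) \<Rightarrow> ('a \<Rightarrow> int) \<Rightarrow> bool" where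
  "is_cocycle M T U c \<longleftrightarrow> c \<in> measurable M (count_space UNIV)
      \<and> (AE x in M. U x = tpow T (c x) x)"

definition cocycle :: "'a measure \<Rightarrow> ('a \<Rightarrow> 'a) \<Rightarrow> ('a \<Rightarrow> 'a) \<Rightarrow> 'a \<Rightarrow> int" where
  "cocycle M T U = (SOME c. is_cocycle M T U c)"

definition full_group :: "'a measure \<Rightarrow> ('a \<Rightarrow> 'a) \<Rightarrow> ('a \<Rightarrow> 'a) set" where
  "full_group M T = {U. aut M U \<and> (\<exists>c. is_cocycle M T U c)}"

definition metric_compatible :: "(real \<Rightarrow> real) \<Rightarrow> bool" where
  "metric_compatible \<phi> \<longleftrightarrow>
     (\<forall>t\<ge>0. \<phi> t \<ge> 0)
     \<and> (\<forall>s\<ge>0. \<forall>t\<ge>0. \<phi> (s + t) \<le> \<phi> s + \<phi> t)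
     \<and> (\<forall>s\<ge>0. \<forall>t\<ge>s. \<phi> s \<le> \<phi> t)
     \<and> \<phi> 0 = 0
     \<and> (\<forall>t>0. \<phi> t > 0)"

definition full_group_phi :: "'a measure \<Rightarrow> (real \<Rightarrow> real) \<Rightarrow> ('a \<Rightarrow> 'a) \<Rightarrow> ('a \<Rightarrow> 'a) set" where
  "full_group_phi M \<phi> T = {U \<in> full_group M T.
      (\<integral>\<^sup>+ x. ennreal (\<phi> (real_of_int \<bar>cocycle M T U x\<bar>)) \<partial>M) < \<infinity>}"

definition d_phi :: "'a measure \<Rightarrow> (real \<Rightarrow> real) \<Rightarrow> ('a \<Rightarrow> 'a) \<Rightarrow> ('a \<Rightarrow> 'a) \<Rightarrow> ('a \<Rightarrow> 'a) \<Rightarrow> real" where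
  "d_phi M \<phi> T U V = (\<integral> x. \<phi> (real_of_int \<bar>cocycle M T U x - cocycle M T V x\<bar>) \<partial>M)"

end

theory Submission
  imports Defs
begin

text \<open>An element \<open>U\<close> of the full group \<open>[T]\<close> is described by its cocycle \<open>c\<^sub>U\<close>, which is unique
  almost everywhere because \<open>T\<close> is aperiodic. The cocycle of \<open>U \<circ> V\<close> is \<open>c\<^sub>U \<circ> V + c\<^sub>V\<close> and that of
  \<open>U\<inverse>\<close> is \<open>- c\<^sub>U \<circ> U\<inverse>\<close>; as measure-preserving maps preserve integrals, integrability of
  \<open>\<phi>(\<bar>c\<^sub>U\<bar>)\<close> survives the group operations and \<open>d\<^sub>\<phi>\<close> is right invariant, and it separates points
  since \<open>\<phi>(\<bar>k\<bar>) \<ge> \<phi>(1) > 0\<close> for \<open>k \<noteq> 0\<close>.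

  For completeness, pass to a subsequence with summable increments. The set where consecutive terms
  differ, and its image where their inverses differ, have measure at most \<open>d\<^sub>\<phi>/\<phi>(1)\<close>, so by
  Borel--Cantelli the cocycles of the terms and of their inverses stabilise almost everywhere. The
  limits are mutually inverse a.e.; corrected on a \<open>T\<close>-invariant null set they give a
  measure-preserving bijection, and Fatou's lemma gives convergence. Left translation is continuous
  because \<open>U \<circ> R\<close> and \<open>U \<circ> V\<close> have equal cocycles off the small set where \<open>R\<close> and \<open>V\<close> do not, where
  absolute continuity of the integral applies; right invariance does the rest. Separability comes
  from approximating cocycles by step functions over a countable family of sets that is dense in the
  measure algebra.\<close>

lemma eventually_const_of_eventually_eq_Suc:
  assumes "eventually (\<lambda>k. f k = f (Suc k)) sequentially"
  shows "\<exists>N. \<forall>k\<ge>N. f k = f N"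
proof -
  obtain N where N: "\<And>k. k \<ge> N \<Longrightarrow> f k = f (Suc k)"
    using assms unfolding eventually_sequentially by auto
  have "f (N + i) = f N" for i
    by (induction i) (use N[of "N + _"] in auto)
  then show ?thesis by (metis le_add_diff_inverse)
qed

lemma Cauchy_subseq_geometric:
  fixes d :: "'b \<Rightarrow> 'b \<Rightarrow> real"
  assumes "\<forall>e>0. \<exists>N. \<forall>m\<ge>N. \<forall>n\<ge>N. d (S m) (S n) < e"
  obtains \<sigma> :: "nat \<Rightarrow> nat"
  where "\<And>k m n. \<sigma> k \<le> m \<Longrightarrow> \<sigma> k \<le> n \<Longrightarrow> d (S m) (S n) < (1/2)^k" and "mono \<sigma>"
proof -
  have "\<forall>k. \<exists>N. \<forall>m\<ge>N. \<forall>n\<ge>N. d (S m) (S n) < (1/2::real)^k" using assms by simp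
  then obtain N where N: "\<And>k m n. N k \<le> m \<Longrightarrow> N k \<le> n \<Longrightarrow> d (S m) (S n) < (1/2::real)^k"
    by metis
  show thesis
  proof
    show "mono (\<lambda>k. \<Sum>i\<le>k. N i)" by (intro monoI sum_mono2) auto
    show "d (S m) (S n) < (1/2)^k" if "(\<Sum>i\<le>k. N i) \<le> m" "(\<Sum>i\<le>k. N i) \<le> n" for k m n
      using N[of k m n] that member_le_sum[of k "{..k}" N] by simp
  qed
qed

lemma tpow_of_nat: "tpow T (int n) = T ^^ n"
  by (simp add: tpow_def)

lemma tpow_0 [simp]: "tpow T 0 = id"
  by (simp add: tpow_def)

lemma tpow_minus_of_nat: "tpow T (- int n) = inv T ^^ n"
proof (cases n)
  case (Suc m)
  then have "\<not> - int n \<ge> 0" by simp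
  then show ?thesis unfolding tpow_def by simp
qed (simp add: tpow_def)

lemma tpow_add1:
  assumes "bij T" shows "tpow T (k + 1) = T \<circ> tpow T k"
proof (cases "k \<ge> 0")
  case True
  then have "nat (k + 1) = Suc (nat k)" by simp
  with True show ?thesis by (simp add: tpow_def)
next
  case False
  define m where "m = nat (- k) - 1"
  have m: "k = - int (Suc m)" using False unfolding m_def by simp
  have "T \<circ> inv T = id" using assms by (metis bij_is_surj surj_iff)
  moreover have "tpow T (k + 1) = inv T ^^ m" using m by (simp add: tpow_minus_of_nat[symmetric])
  moreover have "tpow T k = inv T \<circ> (inv T ^^ m)" using m by (simp only: tpow_minus_of_nat funpow.simps(2))
  ultimately show ?thesis by (simp add: comp_assoc[symmetric])
qed

lemma tpow_diff1:
  assumes "bij T" shows "tpow T (k - 1) = inv T \<circ> tpow T k"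
proof -
  have "inv T \<circ> T = id" using assms by (simp add: bij_is_inj)
  then show ?thesis using tpow_add1[OF assms, of "k - 1"] by (simp add: comp_assoc[symmetric])
qed

lemma tpow_add:
  assumes "bij T" shows "tpow T (a + b) = tpow T a \<circ> tpow T b"
proof (induction a rule: int_induct[where k = 0])
  case (step1 i)
  have "tpow T (i + 1 + b) = tpow T ((i + b) + 1)" by (simp add: algebra_simps)
  then show ?case using step1 by (simp add: tpow_add1[OF assms] comp_assoc)
next
  case (step2 i)
  have "tpow T (i - 1 + b) = tpow T ((i + b) - 1)" by (simp add: algebra_simps)
  then show ?case using step2 by (simp add: tpow_diff1[OF assms] comp_assoc)
qed simp

lemma tpow_add_apply: "bij T \<Longrightarrow> tpow T (a + b) x = tpow T a (tpow T b x)"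
  by (simp add: tpow_add)

lemma aut_bij: "aut M U \<Longrightarrow> bij U"
  by (simp add: aut_def)

lemma aut_measurable: "aut M U \<Longrightarrow> U \<in> M \<rightarrow>\<^sub>M M"
  by (simp add: aut_def)

lemma aut_id: "aut M id"
  using distr_id[of M, folded id_def] by (simp add: aut_def)

lemma aut_comp:
  assumes U: "aut M U" and V: "aut M V" shows "aut M (U \<circ> V)"
proof -
  have "inv (U \<circ> V) = inv V \<circ> inv U" using U V by (simp add: o_inv_distrib bij_def aut_def)
  moreover have "distr M M (U \<circ> V) = distr (distr M M V) M U"
    using U V by (subst distr_distr) (auto simp: aut_def)
  ultimately show ?thesis using U V by (auto simp: aut_def bij_comp intro: measurable_comp)
qed

lemma aut_inv:
  assumes U: "aut M U" shows "aut M (inv U)"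
proof -
  have bU: "bij U" using U by (rule aut_bij)
  have "distr M M (inv U) = distr (distr M M U) M (inv U)" using U by (simp add: aut_def)
  also have "\<dots> = distr M M (inv U \<circ> U)" using U by (subst distr_distr) (auto simp: aut_def)
  also have "inv U \<circ> U = id" using bU by (simp add: bij_is_inj)
  finally have "distr M M (inv U) = M" by (simp add: id_def distr_id)
  then show ?thesis using U bU by (auto simp: aut_def bij_imp_bij_inv inv_inv_eq)
qed

lemma aut_funpow: "aut M U \<Longrightarrow> aut M (U ^^ n)"
  by (induction n) (auto simp: aut_id aut_comp)

lemma aut_tpow: "aut M T \<Longrightarrow> aut M (tpow T k)"
  by (simp add: tpow_def aut_funpow aut_inv)

lemma emeasure_vimage_aut:
  assumes "aut M U" "A \<in> sets M" shows "emeasure M (U -` A \<inter> space M) = emeasure M A"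
  using assms emeasure_distr[of U M M A] by (simp add: aut_def)

lemma AE_comp_aut:
  assumes U: "aut M U" and P: "AE x in M. P x" shows "AE x in M. P (U x)"
proof -
  obtain N where N: "{x \<in> space M. \<not> P x} \<subseteq> N" "emeasure M N = 0" "N \<in> sets M"
    using P by (rule AE_E)
  have "U -` N \<inter> space M \<in> null_sets M"
    using emeasure_vimage_aut[OF U N(3)] N aut_measurable[OF U] by (auto intro: measurable_sets)
  moreover have "{x \<in> space M. \<not> P (U x)} \<subseteq> U -` N \<inter> space M"
    using N(1) aut_measurable[OF U] by (auto simp: measurable_def)
  ultimately show ?thesis by (rule AE_I')
qed

lemma integral_comp_aut:
  fixes f :: "'a \<Rightarrow> real"
  assumes "aut M U" and "f \<in> borel_measurable M"
  shows "(\<integral>x. f (U x) \<partial>M) = (\<integral>x. f x \<partial>M)"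
  using integral_distr[OF aut_measurable[OF assms(1)] assms(2)] assms(1) by (simp add: aut_def)

lemma integrable_comp_aut:
  fixes f :: "'a \<Rightarrow> real"
  assumes "aut M U" and "f \<in> borel_measurable M"
  shows "integrable M (\<lambda>x. f (U x)) \<longleftrightarrow> integrable M f"
  using integrable_distr_eq[OF aut_measurable[OF assms(1)] assms(2)] assms(1) by (simp add: aut_def)

lemma (in finite_measure) distr_eq_of_AE_eventually_eq:
  assumes s: "\<And>k. s k \<in> M \<rightarrow>\<^sub>M M" "\<And>k. distr M M (s k) = M" and U: "U \<in> M \<rightarrow>\<^sub>M M"
    and lim: "AE x in M. eventually (\<lambda>k. s k x = U x) sequentially"
  shows "distr M M U = M"
proof (rule measure_eqI)
  fix A assume "A \<in> sets (distr M M U)"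
  then have A: "A \<in> sets M" by simp
  have "(\<lambda>k. \<integral>x. indicator A (s k x) \<partial>M) \<longlonglongrightarrow> (\<integral>x. indicator A (U x) \<partial>M :: real)"
  proof (rule integral_dominated_convergence[where w = "\<lambda>x. 1"])
    show "AE x in M. (\<lambda>k. indicator A (s k x) :: real) \<longlonglongrightarrow> indicator A (U x)"
      using lim
    proof eventually_elim
      case (elim x)
      then have "eventually (\<lambda>k. indicator A (s k x) = (indicator A (U x) :: real)) sequentially"
        by eventually_elim simp
      then show ?case by (rule tendsto_eventually)
    qed
  qed (use A s(1) U in \<open>auto simp: indicator_def\<close>)
  moreover have "(\<integral>x. indicator A (s k x) \<partial>M) = measure M A" for k
  proof -
    have "(\<integral>x. indicator A (s k x) \<partial>M) = (\<integral>x. indicator A x \<partial>M :: real)"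
      using integral_distr[OF s(1)[of k], of "indicator A :: 'a \<Rightarrow> real"] A s(2)[of k] by simp
    then show ?thesis using A by (simp add: emeasure_eq_measure)
  qed
  ultimately have lim: "(\<integral>x. indicator A (U x) \<partial>M) = measure M A"
    by (simp add: LIMSEQ_const_iff)
  have UA: "(\<lambda>x. indicator A (U x) :: real) \<in> borel_measurable M"
    using measurable_compose[OF U borel_measurable_indicator[OF A]] .
  have "emeasure (distr M M U) A = (\<integral>\<^sup>+x. ennreal (indicator A (U x)) \<partial>M)"
    using nn_integral_distr[OF U, of "indicator A"] A by (simp add: ennreal_indicator)
  also have "\<dots> = ennreal (\<integral>x. indicator A (U x) \<partial>M)"
    using UA by (intro nn_integral_eq_integral integrable_const_bound[where B = 1]) auto
  finally show "emeasure (distr M M U) A = emeasure M A"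
    using lim A by (simp add: emeasure_eq_measure)
qed simp

lemma AE_inverse_of_limits:
  assumes s: "\<And>k. bij (s k)"
    and f: "AE x in M. eventually (\<lambda>k. s k x = f x) sequentially"
    and g: "AE x in M. eventually (\<lambda>k. inv (s k) x = g x) sequentially"
    and AE_f: "\<And>P. AE x in M. P x \<Longrightarrow> AE x in M. P (f x)"
    and AE_g: "\<And>P. AE x in M. P x \<Longrightarrow> AE x in M. P (g x)"
  shows "AE x in M. f (g x) = x \<and> g (f x) = x"
proof -
  have "AE x in M. f (g x) = x"
    using AE_g[OF f] g
  proof eventually_elim
    case (elim x)
    from eventually_conj[OF elim] obtain k where "s k (g x) = f (g x)" "inv (s k) x = g x"
      by (auto simp: eventually_sequentially)
    then show ?case using s[of k] by (metis bij_inv_eq_iff)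
  qed
  moreover have "AE x in M. g (f x) = x"
    using AE_f[OF g] f
  proof eventually_elim
    case (elim x)
    from eventually_conj[OF elim] obtain k where "inv (s k) (f x) = g (f x)" "s k x = f x"
      by (auto simp: eventually_sequentially)
    then show ?case using s[of k] by (metis bij_inv_eq_iff)
  qed
  ultimately show ?thesis by eventually_elim simp
qed

lemma measurable_countable_real:
  fixes c :: "'a \<Rightarrow> 'i::countable"
  shows "c \<in> M \<rightarrow>\<^sub>M count_space UNIV \<Longrightarrow> (\<lambda>x. f (c x) :: real) \<in> borel_measurable M"
  by (rule measurable_compose_countable[where f = "\<lambda>i x. f i"]) auto

lemma measurable_countable2:
  fixes c :: "'a \<Rightarrow> 'i::countable" and d :: "'a \<Rightarrow> 'j::countable"
  assumes c: "c \<in> M \<rightarrow>\<^sub>M count_space UNIV" and d: "d \<in> M \<rightarrow>\<^sub>M count_space UNIV"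
  shows "(\<lambda>x. g (c x) (d x)) \<in> M \<rightarrow>\<^sub>M count_space UNIV"
proof -
  have "(\<lambda>x. g i (d x)) \<in> M \<rightarrow>\<^sub>M count_space UNIV" for i
    by (rule measurable_compose_countable[where f = "\<lambda>j x. g i j", OF _ d]) auto
  then show ?thesis by (rule measurable_compose_countable[OF _ c])
qed

lemma measurable_countable_real2:
  fixes c :: "'a \<Rightarrow> 'i::countable" and d :: "'a \<Rightarrow> 'j::countable"
  assumes "c \<in> M \<rightarrow>\<^sub>M count_space UNIV" and "d \<in> M \<rightarrow>\<^sub>M count_space UNIV"
  shows "(\<lambda>x. f (c x) (d x) :: real) \<in> borel_measurable M"
  using measurable_countable_real[OF measurable_countable2[OF assms, of Pair], of "case_prod f"] by simp

lemma measurable_countable1: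
  fixes c :: "'a \<Rightarrow> 'i::countable"
  shows "c \<in> M \<rightarrow>\<^sub>M count_space UNIV \<Longrightarrow> (\<lambda>x. g (c x)) \<in> M \<rightarrow>\<^sub>M count_space UNIV"
  using measurable_countable2[of c M c "\<lambda>a b. g a"] by simp

lemma sets_countable_pred2:
  fixes c :: "'a \<Rightarrow> 'i::countable" and d :: "'a \<Rightarrow> 'j::countable"
  assumes "c \<in> M \<rightarrow>\<^sub>M count_space UNIV" and "d \<in> M \<rightarrow>\<^sub>M count_space UNIV"
  shows "{x \<in> space M. P (c x) (d x)} \<in> sets M"
  using measurable_sets[OF measurable_countable2[OF assms, of P], of "{True}"]
  by (simp add: vimage_def Int_def conj_commute)

lemma measurable_tpow_apply:
  assumes "aut M T" and "c \<in> M \<rightarrow>\<^sub>M count_space UNIV"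
  shows "(\<lambda>x. tpow T (c x) x) \<in> M \<rightarrow>\<^sub>M M"
  by (rule measurable_compose_countable[OF _ assms(2)]) (use aut_tpow[OF assms(1)] in \<open>auto simp: aut_def\<close>)

lemma measurable_AE_eventually_limit:
  fixes c :: "nat \<Rightarrow> 'a \<Rightarrow> 'i::countable"
  assumes c: "\<And>k. c k \<in> M \<rightarrow>\<^sub>M count_space UNIV"
    and ev: "AE x in M. \<exists>N. \<forall>k\<ge>N. c k x = c N x"
  obtains C where "C \<in> M \<rightarrow>\<^sub>M count_space UNIV" "AE x in M. eventually (\<lambda>k. c k x = C x) sequentially"
proof
  define P where "P N x \<longleftrightarrow> (\<forall>k\<ge>N. c k x = c N x)" for N x
  have "{x \<in> space M. P N x} = (\<Inter>k\<in>{N..}. {x \<in> space M. c k x = c N x}) \<inter> space M" for N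
    by (auto simp: P_def)
  then have "{x \<in> space M. P N x} \<in> sets M" for N
    using sets_countable_pred2[OF c c] by (auto intro!: sets.countable_INT'')
  then have "(\<lambda>x. P N x) \<in> M \<rightarrow>\<^sub>M count_space UNIV" for N
    by (simp add: pred_def)
  then have "(\<lambda>x. LEAST N. P N x) \<in> M \<rightarrow>\<^sub>M count_space UNIV"
    by (rule measurable_Least)
  then show "(\<lambda>x. c (LEAST N. P N x) x) \<in> M \<rightarrow>\<^sub>M count_space UNIV"
    by (rule measurable_compose_countable[OF c])
  show "AE x in M. eventually (\<lambda>k. c k x = c (LEAST N. P N x) x) sequentially"
    using ev
  proof eventually_elim
    case (elim x)
    then have "P (LEAST N. P N x) x" unfolding P_def[abs_def] by (rule LeastI_ex)
    then show ?case unfolding eventually_sequentially P_def by blast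
  qed
qed

section \<open>Separable measure algebras\<close>

definition separable_measure :: "'a measure \<Rightarrow> bool" where
  "separable_measure M \<longleftrightarrow> (\<exists>\<A>. countable \<A> \<and> \<A> \<subseteq> sets M \<and>
     (\<forall>A\<in>sets M. \<forall>e>0. \<exists>B\<in>\<A>. measure M ((A - B) \<union> (B - A)) < e))"

lemma (in finite_measure) approx_Union_by_finite_Union:
  assumes "countable \<B>" "\<B> \<subseteq> sets M" "0 < e"
  obtains \<F> where "finite \<F>" "\<F> \<subseteq> \<B>" "measure M (\<Union>\<B> - \<Union>\<F>) < e"
proof (cases "\<B> = {}")
  case True
  with \<open>0 < e\<close> show thesis by (intro that[of "{}"]) auto
next
  case False
  define V where "V n = \<Union>(from_nat_into \<B> ` {..<n})" for n
  have from_nat: "from_nat_into \<B> i \<in> \<B>" for i using from_nat_into[OF False] .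
  have V: "V n \<in> sets M" for n
    unfolding V_def using from_nat assms(2) by (intro sets.finite_Union) auto
  have "\<Union>\<B> \<subseteq> (\<Union>n. V n)"
  proof
    fix x assume "x \<in> \<Union>\<B>"
    then obtain B where "x \<in> B" "B \<in> \<B>" by blast
    moreover from \<open>B \<in> \<B>\<close> obtain i where "B = from_nat_into \<B> i"
      using range_from_nat_into[OF False assms(1)] by blast
    ultimately show "x \<in> (\<Union>n. V n)" unfolding V_def by blast
  qed
  then have Union_V: "(\<Union>n. V n) = \<Union>\<B>" using from_nat by (auto simp: V_def)
  have "incseq V" unfolding V_def by (intro monoI Union_mono image_mono) auto
  then have "(\<lambda>n. measure M (V n)) \<longlonglongrightarrow> measure M (\<Union>\<B>)"
    unfolding Union_V[symmetric] using V by (intro finite_Lim_measure_incseq) auto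
  then obtain n where n: "measure M (\<Union>\<B>) - e < measure M (V n)"
    using order_tendstoD(1)[of _ "measure M (\<Union>\<B>)" sequentially "measure M (\<Union>\<B>) - e"] \<open>0 < e\<close>
    by (auto simp: eventually_sequentially)
  have "\<Union>\<B> \<in> sets M" using assms(1,2) by (intro sets.countable_Union) auto
  moreover have "V n \<subseteq> \<Union>\<B>" using from_nat by (auto simp: V_def)
  ultimately have "measure M (\<Union>\<B> - V n) < e"
    using n finite_measure_Diff[OF _ V] by simp
  then show thesis using from_nat by (intro that[of "from_nat_into \<B> ` {..<n}"]) (auto simp: V_def)
qed

lemma approx_finite_family:
  assumes "finite_measure M" and I: "finite I" and A: "\<And>k. A k \<in> sets M" and \<A>: "\<A> \<subseteq> sets M"
    and approx: "\<And>A e. A \<in> sets M \<Longrightarrow> 0 < e \<Longrightarrow> \<exists>B\<in>\<A>. measure M ((A - B) \<union> (B - A)) < e"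
    and "0 < \<delta>"
  shows "\<exists>\<beta>\<in>I \<rightarrow>\<^sub>E \<A>. (\<Union>k\<in>I. (A k - \<beta> k) \<union> (\<beta> k - A k)) \<in> sets M
    \<and> measure M (\<Union>k\<in>I. (A k - \<beta> k) \<union> (\<beta> k - A k)) < \<delta>"
proof -
  interpret finite_measure M by fact
  define \<epsilon> where "\<epsilon> = \<delta> / (real (card I) + 1)"
  have "0 < \<epsilon>" using \<open>0 < \<delta>\<close> by (simp add: \<epsilon>_def)
  have "\<forall>k. \<exists>B. B \<in> \<A> \<and> measure M ((A k - B) \<union> (B - A k)) < \<epsilon>"
    using approx[OF A \<open>0 < \<epsilon>\<close>] by blast
  from choice[OF this] obtain \<beta>0 where \<beta>0: "\<forall>k. \<beta>0 k \<in> \<A> \<and> measure M ((A k - \<beta>0 k) \<union> (\<beta>0 k - A k)) < \<epsilon>" ..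
  define \<beta> where "\<beta> = restrict \<beta>0 I"
  have \<beta>: "\<beta> \<in> I \<rightarrow>\<^sub>E \<A>" using \<beta>0 by (simp add: \<beta>_def)
  have sets: "(A k - \<beta> k) \<union> (\<beta> k - A k) \<in> sets M" if "k \<in> I" for k
  proof -
    have "\<beta> k \<in> sets M" using that \<beta>0 \<A> by (auto simp: \<beta>_def)
    with A[of k] show ?thesis by auto
  qed
  have "measure M (\<Union>k\<in>I. (A k - \<beta> k) \<union> (\<beta> k - A k)) \<le> (\<Sum>k\<in>I. measure M ((A k - \<beta> k) \<union> (\<beta> k - A k)))"
    using I sets by (rule measure_UNION_le)
  also have "\<dots> \<le> (\<Sum>k\<in>I. \<epsilon>)"
    using \<beta>0 by (intro sum_mono) (simp add: \<beta>_def less_imp_le)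
  also have "\<dots> < \<delta>"
    using \<open>0 < \<epsilon>\<close> by (simp add: \<epsilon>_def field_simps)
  finally have small: "measure M (\<Union>k\<in>I. (A k - \<beta> k) \<union> (\<beta> k - A k)) < \<delta>" .
  have "(\<Union>k\<in>I. (A k - \<beta> k) \<union> (\<beta> k - A k)) \<in> sets M"
    by (rule sets.finite_UN[OF I]) (rule sets)
  then show ?thesis by (intro bexI[of _ \<beta>] conjI small \<beta>)
qed

lemma outer_regular_measure:
  fixes M :: "'a::{second_countable_topology, complete_space} measure"
  assumes sets: "sets M = sets borel" and finite: "finite_measure M" and A: "A \<in> sets M" and "0 < e"
  obtains U where "A \<subseteq> U" "open U" "measure M (U - A) < e"
proof -
  interpret finite_measure M by (rule finite)
  have "emeasure M A = (INF U\<in>{U. A \<subseteq> U \<and> open U}. emeasure M U)"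
    using A sets by (intro outer_regular) auto
  moreover have "emeasure M A < emeasure M A + ennreal e"
    using \<open>0 < e\<close> by (simp add: emeasure_eq_measure ennreal_less_iff flip: ennreal_plus)
  ultimately obtain U where U: "A \<subseteq> U" "open U" "emeasure M U < emeasure M A + ennreal e"
    by (metis (no_types, lifting) INF_less_iff mem_Collect_eq)
  have "U \<in> sets M" using U(2) sets by simp
  then have "measure M (U - A) < e"
    using U(3) \<open>0 < e\<close> finite_measure_Diff[OF _ A U(1)]
    by (simp add: emeasure_eq_measure ennreal_less_iff flip: ennreal_plus)
  with U(1,2) show thesis by (rule that)
qed

lemma separable_measure_borel:
  fixes M :: "'a::{second_countable_topology, complete_space} measure"
  assumes sets: "sets M = sets borel" and finite: "finite_measure M"
  shows "separable_measure M"
proof -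
  interpret finite_measure M by (rule finite)
  obtain \<B> :: "'a set set" where \<B>: "countable \<B>" "topological_basis \<B>"
    using ex_countable_basis by blast
  have \<B>_sets: "\<B> \<subseteq> sets M"
    using topological_basis_open[OF \<B>(2)] sets by auto
  define \<A> where "\<A> = Union ` {\<F>. finite \<F> \<and> \<F> \<subseteq> \<B>}"
  have "countable \<A>" unfolding \<A>_def using countable_Collect_finite_subset[OF \<B>(1)] by simp
  moreover have "\<A> \<subseteq> sets M" using \<B>_sets by (auto simp: \<A>_def)
  moreover have "\<exists>B\<in>\<A>. measure M ((A - B) \<union> (B - A)) < e" if A: "A \<in> sets M" and "0 < e" for A e
  proof -
    obtain U where U: "A \<subseteq> U" "open U" "measure M (U - A) < e / 2"
      using outer_regular_measure[OF sets finite A, of "e / 2"] \<open>0 < e\<close> by auto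
    have U_sets: "U \<in> sets M" using U(2) sets by simp
    obtain \<B>' where \<B>': "\<B>' \<subseteq> \<B>" "\<Union>\<B>' = U"
      using \<B>(2) U(2) unfolding topological_basis_def by blast
    obtain \<F> where \<F>: "finite \<F>" "\<F> \<subseteq> \<B>'" "measure M (U - \<Union>\<F>) < e / 2"
      using approx_Union_by_finite_Union[of \<B>' "e / 2"] countable_subset[OF \<B>'(1) \<B>(1)] \<B>' \<B>_sets \<open>0 < e\<close>
      by auto
    have F_sets: "\<Union>\<F> \<in> sets M" using \<F> \<B>' \<B>_sets by (intro sets.finite_Union) auto
    have "measure M ((A - \<Union>\<F>) \<union> (\<Union>\<F> - A)) \<le> measure M ((U - \<Union>\<F>) \<union> (U - A))"
      using U(1) \<B>'(2) \<F>(2) A U_sets F_sets by (intro finite_measure_mono) auto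
    also have "\<dots> \<le> measure M (U - \<Union>\<F>) + measure M (U - A)"
      using A U_sets F_sets by (intro measure_Un_le) auto
    finally have "measure M ((A - \<Union>\<F>) \<union> (\<Union>\<F> - A)) < e" using U(3) \<F>(3) by simp
    moreover have "\<Union>\<F> \<in> \<A>" using \<F> \<B>' by (auto simp: \<A>_def)
    ultimately show ?thesis by blast
  qed
  ultimately show ?thesis unfolding separable_measure_def by blast
qed

lemma ex_countable_dense_subset:
  fixes d :: "'b \<Rightarrow> 'b \<Rightarrow> real" and \<rho> :: "'b \<Rightarrow> 'c \<Rightarrow> real"
  assumes "countable F"
    and approx: "\<And>U e. U \<in> G \<Longrightarrow> 0 < e \<Longrightarrow> \<exists>f\<in>F. \<rho> U f < e"
    and triangle: "\<And>U V f. U \<in> G \<Longrightarrow> V \<in> G \<Longrightarrow> f \<in> F \<Longrightarrow> d U V \<le> \<rho> U f + \<rho> V f"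
  shows "\<exists>D\<subseteq>G. countable D \<and> (\<forall>U\<in>G. \<forall>e>0. \<exists>V\<in>D. d U V < e)"
proof -
  \<comment> \<open>one element of \<open>G\<close> for each pair of an approximant and a rational radius\<close>
  define I where "I = {(f, q). f \<in> F \<and> q \<in> \<rat> \<and> (\<exists>V\<in>G. \<rho> V f < q)}"
  define pick where "pick fq = (SOME V. V \<in> G \<and> \<rho> V (fst fq) < snd fq)" for fq
  have pick: "pick fq \<in> G \<and> \<rho> (pick fq) (fst fq) < snd fq" if "fq \<in> I" for fq
  proof -
    obtain f q where fq: "fq = (f, q)" by (cases fq)
    with that have "\<exists>V. V \<in> G \<and> \<rho> V f < q" by (auto simp: I_def)
    then have "pick (f, q) \<in> G \<and> \<rho> (pick (f, q)) f < q"
      unfolding pick_def fst_conv snd_conv by (rule someI_ex)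
    with fq show ?thesis by simp
  qed
  have "countable I"
    by (rule countable_subset[of _ "F \<times> \<rat>"]) (use \<open>countable F\<close> countable_rat in \<open>auto simp: I_def\<close>)
  moreover have "\<exists>V\<in>pick ` I. d U V < e" if U: "U \<in> G" and "0 < e" for U e
  proof -
    obtain f where f: "f \<in> F" "\<rho> U f < e / 3" using approx[OF U, of "e / 3"] \<open>0 < e\<close> by auto
    obtain q where q: "q \<in> \<rat>" "e / 3 < q" "q < 2 * e / 3"
      using Rats_dense_in_real[of "e / 3" "2 * e / 3"] \<open>0 < e\<close> by auto
    have "(f, q) \<in> I" using U f q by (force simp: I_def)
    with pick have "pick (f, q) \<in> G" "\<rho> (pick (f, q)) f < q" by auto
    with triangle[OF U _ f(1)] f(2) q(3) have "d U (pick (f, q)) < e" by fastforce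
    with \<open>(f, q) \<in> I\<close> show ?thesis by blast
  qed
  ultimately show ?thesis using pick by (intro exI[of _ "pick ` I"]) auto
qed

definition step_fun :: "nat \<Rightarrow> (int \<Rightarrow> 'a set) \<Rightarrow> 'a \<Rightarrow> int" where
  "step_fun K \<beta> x = (\<Sum>k\<in>{- int K..int K}. if x \<in> \<beta> k then k else 0)"

lemma abs_step_fun_le: "\<bar>step_fun K \<beta> x\<bar> \<le> (\<Sum>k\<in>{- int K..int K}. \<bar>k\<bar>)"
  unfolding step_fun_def by (rule order_trans[OF sum_abs sum_mono]) auto

lemma measurable_step_fun:
  assumes "\<And>k. k \<in> {- int K..int K} \<Longrightarrow> \<beta> k \<in> sets M"
  shows "step_fun K \<beta> \<in> M \<rightarrow>\<^sub>M count_space UNIV"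
proof -
  have "(\<lambda>x. \<Sum>k\<in>I. if x \<in> \<beta> k then k else 0) \<in> M \<rightarrow>\<^sub>M count_space UNIV"
    if "finite I" "I \<subseteq> {- int K..int K}" for I
    using that
  proof (induction I rule: finite_induct)
    case (insert k I)
    have "(\<lambda>x. if x \<in> \<beta> k then k else 0) \<in> M \<rightarrow>\<^sub>M count_space UNIV"
      using assms insert.prems by (intro measurable_If_set) auto
    with insert show ?case
      using measurable_countable2[of "\<lambda>x. if x \<in> \<beta> k then k else 0" M _ "(+)"] by simp
  qed simp
  then show ?thesis unfolding step_fun_def[abs_def] by simp
qed

lemma step_fun_eq_truncation:
  assumes "\<And>k. k \<in> {- int K..int K} \<Longrightarrow> x \<in> \<beta> k \<longleftrightarrow> c = k"
  shows "step_fun K \<beta> x = (if \<bar>c\<bar> \<le> int K then c else 0)"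
proof -
  have "step_fun K \<beta> x = (\<Sum>k\<in>{- int K..int K}. if c = k then k else 0)"
    unfolding step_fun_def using assms by (intro sum.cong) auto
  also have "\<dots> = (if \<bar>c\<bar> \<le> int K then c else 0)"
    by (simp add: sum.delta abs_le_iff)
  finally show ?thesis .
qed

section \<open>Cocycles of an aperiodic automorphism\<close>

locale aperiodic_aut = prob_space M for M :: "'a measure" +
  fixes T :: "'a \<Rightarrow> 'a"
  assumes space_eq_UNIV [simp]: "space M = UNIV"
    and aut_T: "aut M T" and aperiodic_T: "aperiodic M T"
begin

lemma bij_T: "bij T"
  using aut_T by (rule aut_bij)

lemma image_aut:
  assumes W: "aut M W" and E: "E \<in> sets M"
  shows "W ` E \<in> sets M" and "measure M (W ` E) = measure M E"
proof -
  have "W ` E = inv W -` E"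
    using aut_bij[OF W] bij_vimage_eq_inv_image[of "inv W" E] by (simp add: bij_imp_bij_inv inv_inv_eq)
  then show "W ` E \<in> sets M" and "measure M (W ` E) = measure M E"
    using measurable_sets[OF aut_measurable[OF aut_inv[OF W]] E] emeasure_vimage_aut[OF aut_inv[OF W] E]
    by (simp_all add: measure_def)
qed

lemma AE_all_tpow_apply: "AE x in M. P x \<Longrightarrow> AE x in M. \<forall>k. P (tpow T k x)"
  using AE_comp_aut[OF aut_tpow[OF aut_T]] by (simp add: AE_all_countable)

lemma AE_comp_tpow_apply: "AE x in M. P x \<Longrightarrow> AE x in M. P (tpow T (c x) x)"
  by (drule AE_all_tpow_apply) auto

lemma AE_tpow_inj: "AE x in M. \<forall>a b. tpow T a x = tpow T b x \<longrightarrow> a = b"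
proof -
  have "AE x in M. \<forall>n::nat. 0 < n \<longrightarrow> (T ^^ n) x \<noteq> x"
    using aperiodic_T by (simp add: aperiodic_def AE_all_countable)
  then have "AE x in M. \<forall>a. \<forall>n::nat. 0 < n \<longrightarrow> (T ^^ n) (tpow T a x) \<noteq> tpow T a x"
    by (rule AE_all_tpow_apply)
  then show ?thesis
  proof eventually_elim
    case (elim x)
    have "tpow T a x \<noteq> tpow T b x" if "a < b" for a b
    proof -
      define n where "n = nat (b - a)"
      have n: "b = int n + a" "0 < n" using that by (auto simp: n_def)
      then have "tpow T b x = (T ^^ n) (tpow T a x)"
        by (simp add: tpow_add_apply[OF bij_T] tpow_of_nat)
      then show ?thesis using elim n(2) by metis
    qed
    then show ?case by (metis linorder_neqE)
  qed
qed

lemma cocycle_unique: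
  assumes "is_cocycle M T U c" "is_cocycle M T U c'" shows "AE x in M. c x = c' x"
  using AE_tpow_inj assms by (auto simp: is_cocycle_def elim!: AE_mp)

lemma is_cocycle_cocycle: "U \<in> full_group M T \<Longrightarrow> is_cocycle M T U (cocycle M T U)"
  unfolding full_group_def cocycle_def by (auto intro: someI[where P = "is_cocycle M T U"])

lemma AE_cocycle_eq: "U \<in> full_group M T \<Longrightarrow> is_cocycle M T U c \<Longrightarrow> AE x in M. cocycle M T U x = c x"
  using is_cocycle_cocycle cocycle_unique by blast

lemma measurable_cocycle: "U \<in> full_group M T \<Longrightarrow> cocycle M T U \<in> M \<rightarrow>\<^sub>M count_space UNIV"
  using is_cocycle_cocycle by (simp add: is_cocycle_def)

lemma AE_eq_tpow_cocycle: "U \<in> full_group M T \<Longrightarrow> AE x in M. U x = tpow T (cocycle M T U x) x"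
  using is_cocycle_cocycle by (simp add: is_cocycle_def)

lemma is_cocycle_AE_cong: "is_cocycle M T U c \<Longrightarrow> aut_eq M U V \<Longrightarrow> is_cocycle M T V c"
  unfolding is_cocycle_def aut_eq_def by (auto elim: AE_mp)

lemma is_cocycle_id: "is_cocycle M T id (\<lambda>x. 0)"
  by (simp add: is_cocycle_def)

lemma is_cocycle_comp:
  assumes u: "is_cocycle M T U cu" and v: "is_cocycle M T V cv" and V: "aut M V"
  shows "is_cocycle M T (U \<circ> V) (\<lambda>x. cu (V x) + cv x)"
proof -
  have "AE x in M. U (V x) = tpow T (cu (V x)) (V x)"
    using u by (intro AE_comp_aut[OF V]) (simp add: is_cocycle_def)
  then have "AE x in M. (U \<circ> V) x = tpow T (cu (V x) + cv x) x"
    using v by (auto simp: is_cocycle_def tpow_add_apply[OF bij_T] elim: AE_mp)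
  moreover have "(\<lambda>x. cu (V x) + cv x) \<in> M \<rightarrow>\<^sub>M count_space UNIV"
    using u v measurable_countable2[OF measurable_compose[OF aut_measurable[OF V]], of cu cv "(+)"]
    by (simp add: is_cocycle_def)
  ultimately show ?thesis by (simp add: is_cocycle_def)
qed

lemma is_cocycle_inv:
  assumes u: "is_cocycle M T U c" and U: "aut M U"
  shows "is_cocycle M T (inv U) (\<lambda>x. - c (inv U x))"
proof -
  have "AE x in M. U (inv U x) = tpow T (c (inv U x)) (inv U x)"
    using u by (intro AE_comp_aut[OF aut_inv[OF U]]) (simp add: is_cocycle_def)
  then have "AE x in M. inv U x = tpow T (- c (inv U x)) x"
  proof eventually_elim
    case (elim x)
    then have "x = tpow T (c (inv U x)) (inv U x)"
      using aut_bij[OF U] by (simp add: bij_is_surj surj_f_inv_f)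
    then have "tpow T (- c (inv U x)) x = tpow T (- c (inv U x)) (tpow T (c (inv U x)) (inv U x))"
      by simp
    then show ?case by (simp add: tpow_add_apply[OF bij_T, symmetric])
  qed
  moreover have "(\<lambda>x. - c (inv U x)) \<in> M \<rightarrow>\<^sub>M count_space UNIV"
    using u measurable_countable1[OF measurable_compose[OF aut_measurable[OF aut_inv[OF U]]], of c uminus]
    by (simp add: is_cocycle_def)
  ultimately show ?thesis by (simp add: is_cocycle_def)
qed

lemma AE_eventually_eq_and_inv_eq:
  assumes s: "\<And>k. aut M (s k)" and G: "\<And>k. G k \<in> sets M"
    and neq: "\<And>k x. s k x \<noteq> s (Suc k) x \<Longrightarrow> x \<in> G k"
    and summable: "summable (\<lambda>k. measure M (G k))"
  shows "AE x in M. eventually (\<lambda>k. s k x = s (Suc k) x \<and> inv (s k) x = inv (s (Suc k)) x) sequentially"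
proof -
  define D where "D k = G k \<union> s k ` G k" for k
  have D: "D k \<in> sets M" for k using G image_aut(1)[OF s G] by (simp add: D_def)
  have "measure M (D k) \<le> 2 * measure M (G k)" for k
    using measure_Un_le[OF G[of k] image_aut(1)[OF s[of k] G[of k]]] image_aut(2)[OF s[of k] G[of k]]
    by (simp add: D_def)
  then have "summable (\<lambda>k. measure M (D k))"
    by (intro summable_comparison_test[OF _ summable_mult[OF summable, of 2]]) auto
  then have "AE x in M. eventually (\<lambda>k. x \<in> space M - D k) sequentially"
    using D by (intro borel_cantelli_AE1) (auto simp: less_top[symmetric])
  then show ?thesis
  proof eventually_elim
    case (elim x)
    then show ?case
    proof eventually_elim
      case (elim k)
      have x: "x \<notin> G k" "x \<notin> s k ` G k" using elim by (auto simp: D_def)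
      define y where "y = inv (s k) x"
      have "s k y = x" using aut_bij[OF s[of k]] by (simp add: y_def bij_is_surj surj_f_inv_f)
      with x(2) have "s (Suc k) y = x" using neq by auto
      then have "inv (s (Suc k)) x = y" using aut_bij[OF s[of "Suc k"]] by (metis bij_inv_eq_iff)
      then show ?case using x(1) neq y_def by auto
    qed
  qed
qed

lemma AE_eventually_eq_tpow_limit:
  assumes S: "\<And>k. S k \<in> full_group M T"
    and ev: "AE x in M. eventually (\<lambda>k. S k x = S (Suc k) x) sequentially"
  obtains C where "C \<in> M \<rightarrow>\<^sub>M count_space UNIV"
    and "AE x in M. eventually (\<lambda>k. cocycle M T (S k) x = C x) sequentially"
    and "AE x in M. eventually (\<lambda>k. S k x = tpow T (C x) x) sequentially"
proof -
  have S_eq: "AE x in M. \<forall>k. S k x = tpow T (cocycle M T (S k) x) x"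
    using AE_eq_tpow_cocycle[OF S] by (simp add: AE_all_countable)
  have "AE x in M. \<exists>N. \<forall>k\<ge>N. cocycle M T (S k) x = cocycle M T (S N) x"
    using ev S_eq AE_tpow_inj
  proof eventually_elim
    case (elim x)
    have "eventually (\<lambda>k. cocycle M T (S k) x = cocycle M T (S (Suc k)) x) sequentially"
      using elim(1) by eventually_elim (metis elim(2,3))
    then show ?case by (rule eventually_const_of_eventually_eq_Suc)
  qed
  then obtain C where C: "C \<in> M \<rightarrow>\<^sub>M count_space UNIV"
    and ev_C: "AE x in M. eventually (\<lambda>k. cocycle M T (S k) x = C x) sequentially"
    by (rule measurable_AE_eventually_limit[OF measurable_cocycle[OF S]])
  moreover have "AE x in M. eventually (\<lambda>k. S k x = tpow T (C x) x) sequentially"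
    using ev_C S_eq by eventually_elim (auto elim: eventually_mono)
  ultimately show thesis using that by blast
qed

lemma ex_bij_AE_eq_tpow_apply:
  assumes C: "C \<in> M \<rightarrow>\<^sub>M count_space UNIV" and C': "C' \<in> M \<rightarrow>\<^sub>M count_space UNIV"
    and inverse: "AE x in M. tpow T (C (tpow T (C' x) x)) (tpow T (C' x) x) = x
      \<and> tpow T (C' (tpow T (C x) x)) (tpow T (C x) x) = x"
  obtains U where "bij U" "U \<in> M \<rightarrow>\<^sub>M M" "inv U \<in> M \<rightarrow>\<^sub>M M" "AE x in M. U x = tpow T (C x) x"
proof -
  define f where "f x = tpow T (C x) x" for x
  define g where "g x = tpow T (C' x) x" for x
  note inverse [folded f_def g_def]
  obtain N where N: "{x \<in> space M. \<not> (f (g x) = x \<and> g (f x) = x)} \<subseteq> N" "N \<in> null_sets M"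
    using \<open>AE x in M. f (g x) = x \<and> g (f x) = x\<close> by (rule AE_E) auto
  \<comment> \<open>the complement of the saturation of \<open>N\<close> is invariant under \<open>f\<close> and \<open>g\<close>, which move points along \<open>T\<close>-orbits\<close>
  define Y where "Y = {x. \<forall>j. tpow T j x \<notin> N}"
  have "UNIV - N \<in> sets M" using sets.compl_sets[of N M] N(2) by auto
  then have "tpow T j -` (UNIV - N) \<in> sets M" for j
    using measurable_sets[OF aut_measurable[OF aut_tpow[OF aut_T]]] by simp
  moreover have "Y = (\<Inter>j. tpow T j -` (UNIV - N))" by (auto simp: Y_def)
  ultimately have Y: "Y \<in> sets M" by auto
  have AE_Y: "AE x in M. x \<in> Y"
    using AE_all_tpow_apply[OF AE_not_in[OF N(2)]] by (simp add: Y_def)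
  have inverse_Y: "f (g x) = x \<and> g (f x) = x" if "x \<in> Y" for x
  proof -
    have "tpow T 0 x \<notin> N" using that unfolding Y_def by blast
    then show ?thesis using N(1) by auto
  qed
  have fg_Y: "f x \<in> Y" "g x \<in> Y" if "x \<in> Y" for x
    using that by (auto simp: Y_def f_def g_def tpow_add_apply[OF bij_T, symmetric])
  define U where "U x = (if x \<in> Y then f x else x)" for x
  define V where "V x = (if x \<in> Y then g x else x)" for x
  have UV: "U (V x) = x" "V (U x) = x" for x
    using inverse_Y fg_Y by (auto simp: U_def V_def)
  then have "bij U" "inv U = V"
    by (auto intro: o_bij[of V] simp: fun_eq_iff) (metis UV inv_equality)
  moreover have "f \<in> M \<rightarrow>\<^sub>M M" "g \<in> M \<rightarrow>\<^sub>M M"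
    using measurable_tpow_apply[OF aut_T] C C' by (auto simp: f_def[abs_def] g_def[abs_def])
  then have "U \<in> M \<rightarrow>\<^sub>M M" "V \<in> M \<rightarrow>\<^sub>M M"
    unfolding U_def V_def using Y by (auto intro!: measurable_If_set)
  moreover have "AE x in M. U x = tpow T (C x) x"
    using AE_Y by eventually_elim (simp add: U_def f_def)
  ultimately show thesis using that by simp
qed

lemma limit_in_full_group:
  assumes s: "\<And>k. s k \<in> full_group M T"
    and ev: "AE x in M. eventually (\<lambda>k. s k x = s (Suc k) x \<and> inv (s k) x = inv (s (Suc k)) x) sequentially"
  obtains U C where "aut M U" "is_cocycle M T U C"
    and "AE x in M. eventually (\<lambda>k. cocycle M T (s k) x = C x) sequentially"
proof -
  have aut_s: "aut M (s k)" for k using s by (simp add: full_group_def)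
  have inv_s: "inv (s k) \<in> full_group M T" for k
    using aut_inv[OF aut_s] is_cocycle_inv[OF is_cocycle_cocycle[OF s] aut_s] by (auto simp: full_group_def)
  have "AE x in M. eventually (\<lambda>k. s k x = s (Suc k) x) sequentially"
    using ev by eventually_elim (auto elim: eventually_mono)
  then obtain C where C: "C \<in> M \<rightarrow>\<^sub>M count_space UNIV"
    and ev_C: "AE x in M. eventually (\<lambda>k. cocycle M T (s k) x = C x) sequentially"
    and f: "AE x in M. eventually (\<lambda>k. s k x = tpow T (C x) x) sequentially"
    by (rule AE_eventually_eq_tpow_limit[OF s])
  have "AE x in M. eventually (\<lambda>k. inv (s k) x = inv (s (Suc k)) x) sequentially"
    using ev by eventually_elim (auto elim: eventually_mono)
  then obtain C' where C': "C' \<in> M \<rightarrow>\<^sub>M count_space UNIV"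
    and g: "AE x in M. eventually (\<lambda>k. inv (s k) x = tpow T (C' x) x) sequentially"
    by (rule AE_eventually_eq_tpow_limit[OF inv_s])
  have "AE x in M. tpow T (C (tpow T (C' x) x)) (tpow T (C' x) x) = x
      \<and> tpow T (C' (tpow T (C x) x)) (tpow T (C x) x) = x"
    by (rule AE_inverse_of_limits[OF aut_bij[OF aut_s] f g AE_comp_tpow_apply AE_comp_tpow_apply])
  then obtain U where U: "bij U" "U \<in> M \<rightarrow>\<^sub>M M" "inv U \<in> M \<rightarrow>\<^sub>M M"
    and U_eq: "AE x in M. U x = tpow T (C x) x"
    by (rule ex_bij_AE_eq_tpow_apply[OF C C'])
  have "AE x in M. eventually (\<lambda>k. s k x = U x) sequentially"
    using f U_eq by eventually_elim simp
  then have "distr M M U = M"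
    using aut_s by (intro distr_eq_of_AE_eventually_eq[OF _ _ U(2)]) (auto simp: aut_def)
  then have "aut M U" using U by (simp add: aut_def)
  moreover have "is_cocycle M T U C" using C U_eq by (simp add: is_cocycle_def)
  ultimately show thesis using that ev_C by blast
qed

end

section \<open>The full group of integrable cocycles\<close>

locale metric_compatible_fun =
  fixes \<phi> :: "real \<Rightarrow> real"
  assumes metric_compatible: "metric_compatible \<phi>"
begin

lemma phi_nonneg: "0 \<le> t \<Longrightarrow> 0 \<le> \<phi> t"
  and phi_subadditive: "0 \<le> s \<Longrightarrow> 0 \<le> t \<Longrightarrow> \<phi> (s + t) \<le> \<phi> s + \<phi> t"
  and phi_mono: "0 \<le> s \<Longrightarrow> s \<le> t \<Longrightarrow> \<phi> s \<le> \<phi> t"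
  and phi_0: "\<phi> 0 = 0"
  and phi_pos: "0 < t \<Longrightarrow> 0 < \<phi> t"
  using metric_compatible unfolding metric_compatible_def by blast+

definition Phi :: "int \<Rightarrow> real" where
  "Phi k = \<phi> (real_of_int \<bar>k\<bar>)"

lemma Phi_nonneg: "0 \<le> Phi k"
  unfolding Phi_def by (rule phi_nonneg) simp

lemma Phi_0 [simp]: "Phi 0 = 0"
  by (simp add: Phi_def phi_0)

lemma Phi_minus [simp]: "Phi (- k) = Phi k"
  by (simp add: Phi_def)

lemma Phi_commute: "Phi (a - b) = Phi (b - a)"
  using Phi_minus[of "a - b"] by simp

lemma Phi_mono: "\<bar>a\<bar> \<le> \<bar>b\<bar> \<Longrightarrow> Phi a \<le> Phi b"
  unfolding Phi_def by (rule phi_mono) simp_all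

lemma Phi_add: "Phi (a + b) \<le> Phi a + Phi b"
proof -
  have "Phi (a + b) \<le> \<phi> (real_of_int \<bar>a\<bar> + real_of_int \<bar>b\<bar>)"
    unfolding Phi_def by (rule phi_mono) (simp_all add: abs_triangle_ineq flip: of_int_add)
  also have "\<dots> \<le> Phi a + Phi b"
    unfolding Phi_def by (rule phi_subadditive) simp_all
  finally show ?thesis .
qed

lemma Phi_diff: "Phi (a - b) \<le> Phi a + Phi b"
  using Phi_add[of a "- b"] by simp

lemma Phi_triangle: "Phi (a - c) \<le> Phi (a - b) + Phi (b - c)"
  using Phi_add[of "a - b" "b - c"] by simp

lemma phi_1_pos: "0 < \<phi> 1"
  by (rule phi_pos) simp

lemma phi_1_le_Phi: "k \<noteq> 0 \<Longrightarrow> \<phi> 1 \<le> Phi k"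
  unfolding Phi_def by (rule phi_mono) simp_all

lemma Phi_eq_0_iff [simp]: "Phi k = 0 \<longleftrightarrow> k = 0"
  using phi_1_le_Phi[of k] phi_1_pos by (cases "k = 0") auto

lemma integrable_Phi_diff:
  assumes "c \<in> M \<rightarrow>\<^sub>M count_space UNIV" "c' \<in> M \<rightarrow>\<^sub>M count_space UNIV"
    and "integrable M (\<lambda>x. Phi (c x))" "integrable M (\<lambda>x. Phi (c' x))"
  shows "integrable M (\<lambda>x. Phi (c x - c' x))"
proof (rule Bochner_Integration.integrable_bound)
  show "integrable M (\<lambda>x. Phi (c x) + Phi (c' x))" using assms by simp
  show "(\<lambda>x. Phi (c x - c' x)) \<in> borel_measurable M"
    by (rule measurable_countable_real2[OF assms(1,2)])
  show "AE x in M. norm (Phi (c x - c' x)) \<le> norm (Phi (c x) + Phi (c' x))"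
    using Phi_diff Phi_nonneg by (auto intro!: AE_I2 simp: add_nonneg_nonneg)
qed

lemma integrable_Phi_add:
  assumes "c \<in> M \<rightarrow>\<^sub>M count_space UNIV" "c' \<in> M \<rightarrow>\<^sub>M count_space UNIV"
    and "integrable M (\<lambda>x. Phi (c x))" "integrable M (\<lambda>x. Phi (c' x))"
  shows "integrable M (\<lambda>x. Phi (c x + c' x))"
  using integrable_Phi_diff[OF assms(1) measurable_countable1[OF assms(2)], of uminus] assms(3,4) by simp

lemma integrable_Phi_bounded:
  assumes "finite_measure M" "f \<in> M \<rightarrow>\<^sub>M count_space UNIV" "\<And>x. \<bar>f x\<bar> \<le> B"
  shows "integrable M (\<lambda>x. Phi (f x))"
proof -
  have "Phi (f x) \<le> Phi B" for x using assms(3)[of x] by (intro Phi_mono) auto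
  then show ?thesis
    using assms(1) measurable_countable_real[OF assms(2), of Phi]
    by (intro finite_measure.integrable_const_bound[where B = "Phi B"]) (auto simp: Phi_nonneg)
qed

lemma integral_Phi_truncation_tendsto_0:
  assumes c: "c \<in> M \<rightarrow>\<^sub>M count_space UNIV" and ic: "integrable M (\<lambda>x. Phi (c x))"
  shows "(\<lambda>K::nat. \<integral>x. Phi (c x - (if \<bar>c x\<bar> \<le> int K then c x else 0)) \<partial>M) \<longlonglongrightarrow> 0"
proof -
  have "(\<lambda>K::nat. \<integral>x. Phi (c x - (if \<bar>c x\<bar> \<le> int K then c x else 0)) \<partial>M) \<longlonglongrightarrow> (\<integral>x. 0 \<partial>M)"
  proof (rule integral_dominated_convergence[where w = "\<lambda>x. Phi (c x)"])
    show "(\<lambda>x. Phi (c x - (if \<bar>c x\<bar> \<le> int K then c x else 0))) \<in> borel_measurable M" for K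
      using measurable_countable_real[OF c, of "\<lambda>v. Phi (v - (if \<bar>v\<bar> \<le> int K then v else 0))"] by simp
    show "AE x in M. (\<lambda>K. Phi (c x - (if \<bar>c x\<bar> \<le> int K then c x else 0))) \<longlonglongrightarrow> 0"
    proof (rule AE_I2)
      fix x
      have "eventually (\<lambda>K. Phi (c x - (if \<bar>c x\<bar> \<le> int K then c x else 0)) = 0) sequentially"
        unfolding eventually_sequentially by (rule exI[of _ "nat \<bar>c x\<bar>"]) auto
      then show "(\<lambda>K. Phi (c x - (if \<bar>c x\<bar> \<le> int K then c x else 0))) \<longlonglongrightarrow> 0"
        by (rule tendsto_eventually)
    qed
    show "AE x in M. norm (Phi (c x - (if \<bar>c x\<bar> \<le> int K then c x else 0))) \<le> Phi (c x)" for K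
      by (auto simp: Phi_nonneg abs_of_nonneg[OF Phi_nonneg])
  qed (simp_all add: ic)
  then show ?thesis by simp
qed

lemma abs_truncation_diff_step_fun_le:
  "\<bar>(if \<bar>c\<bar> \<le> int K then c else 0) - step_fun K \<beta> x\<bar> \<le> int K + (\<Sum>k\<in>{- int K..int K}. \<bar>k\<bar>)"
proof -
  have "\<bar>if \<bar>c\<bar> \<le> int K then c else 0\<bar> \<le> int K" by simp
  then show ?thesis using abs_step_fun_le[of K \<beta> x] by linarith
qed

lemma Phi_truncation_diff_step_fun_le:
  assumes "\<And>k. x \<in> A k \<longleftrightarrow> c = k"
  shows "Phi ((if \<bar>c\<bar> \<le> int K then c else 0) - step_fun K \<beta> x)
    \<le> Phi (int K + (\<Sum>k\<in>{- int K..int K}. \<bar>k\<bar>)) * indicator (\<Union>k\<in>{- int K..int K}. (A k - \<beta> k) \<union> (\<beta> k - A k)) x"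
proof (cases "x \<in> (\<Union>k\<in>{- int K..int K}. (A k - \<beta> k) \<union> (\<beta> k - A k))")
  case True
  have "0 \<le> int K + (\<Sum>k\<in>{- int K..int K}. \<bar>k\<bar>)" by (simp add: sum_nonneg)
  then show ?thesis using True abs_truncation_diff_step_fun_le[of c K \<beta> x] by (simp add: Phi_mono)
next
  case False
  then have "step_fun K \<beta> x = (if \<bar>c\<bar> \<le> int K then c else 0)"
    using assms by (intro step_fun_eq_truncation) blast
  then show ?thesis using False by simp
qed

lemma step_fun_approx_truncation:
  assumes fin: "finite_measure M" and c: "c \<in> M \<rightarrow>\<^sub>M count_space UNIV"
    and \<A>: "\<A> \<subseteq> sets M" and approx: "\<And>A e. A \<in> sets M \<Longrightarrow> 0 < e \<Longrightarrow> \<exists>B\<in>\<A>. measure M ((A - B) \<union> (B - A)) < e"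
    and "0 < e"
  obtains \<beta> where "\<beta> \<in> {- int K..int K} \<rightarrow>\<^sub>E \<A>"
    and "(\<integral>x. Phi ((if \<bar>c x\<bar> \<le> int K then c x else 0) - step_fun K \<beta> x) \<partial>M) < e"
proof -
  interpret finite_measure M by (rule fin)
  define P where "P = Phi (int K + (\<Sum>k\<in>{- int K..int K}. \<bar>k\<bar>))"
  have P: "0 \<le> P" by (simp add: P_def Phi_nonneg)
  define A where "A k = {x \<in> space M. c x = k}" for k
  have A: "A k \<in> sets M" for k using sets_countable_pred2[OF c c, of "\<lambda>a b. a = k"] by (simp add: A_def)
  have "0 < e / (P + 1)" using P \<open>0 < e\<close> by simp
  then have "\<exists>\<beta>\<in>{- int K..int K} \<rightarrow>\<^sub>E \<A>. (\<Union>k\<in>{- int K..int K}. (A k - \<beta> k) \<union> (\<beta> k - A k)) \<in> sets M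
      \<and> measure M (\<Union>k\<in>{- int K..int K}. (A k - \<beta> k) \<union> (\<beta> k - A k)) < e / (P + 1)"
    using approx_finite_family[OF fin finite_atLeastAtMost_int A \<A> approx] by simp
  then obtain \<beta> where \<beta>: "\<beta> \<in> {- int K..int K} \<rightarrow>\<^sub>E \<A>"
    and Bad_both: "(\<Union>k\<in>{- int K..int K}. (A k - \<beta> k) \<union> (\<beta> k - A k)) \<in> sets M
      \<and> measure M (\<Union>k\<in>{- int K..int K}. (A k - \<beta> k) \<union> (\<beta> k - A k)) < e / (P + 1)"
    by (rule bexE)
  note Bad = Bad_both[THEN conjunct1] and Bad_small = Bad_both[THEN conjunct2]
  define Bad where "Bad = (\<Union>k\<in>{- int K..int K}. (A k - \<beta> k) \<union> (\<beta> k - A k))"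
  have "(\<integral>x. Phi ((if \<bar>c x\<bar> \<le> int K then c x else 0) - step_fun K \<beta> x) \<partial>M) \<le> (\<integral>x. P * indicator Bad x \<partial>M)"
  proof (rule integral_mono)
    have "step_fun K \<beta> \<in> M \<rightarrow>\<^sub>M count_space UNIV"
      using \<beta> \<A> by (intro measurable_step_fun) auto
    then have "(\<lambda>x. (if \<bar>c x\<bar> \<le> int K then c x else 0) - step_fun K \<beta> x) \<in> M \<rightarrow>\<^sub>M count_space UNIV"
      by (rule measurable_countable2[OF measurable_countable1[OF c]])
    then show "integrable M (\<lambda>x. Phi ((if \<bar>c x\<bar> \<le> int K then c x else 0) - step_fun K \<beta> x))"
      by (rule integrable_Phi_bounded[OF fin _ abs_truncation_diff_step_fun_le])
    show "integrable M (\<lambda>x. P * indicator Bad x)"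
      using Bad by (intro Bochner_Integration.integrable_mult_right integrable_real_indicator)
        (auto simp: Bad_def less_top[symmetric])
    show "Phi ((if \<bar>c x\<bar> \<le> int K then c x else 0) - step_fun K \<beta> x) \<le> P * indicator Bad x"
      if "x \<in> space M" for x
      using that Phi_truncation_diff_step_fun_le[of x A "c x" K \<beta>] by (simp add: A_def P_def Bad_def)
  qed
  also have "\<dots> = P * measure M Bad" using Bad by (simp add: Bad_def)
  also have "\<dots> \<le> P * (e / (P + 1))"
    using Bad_small P by (intro mult_left_mono) (auto simp: Bad_def)
  also have "\<dots> < e" using P \<open>0 < e\<close> by (simp add: field_simps)
  finally show thesis by (rule that[OF \<beta>])
qed

lemma step_fun_approx:
  assumes fin: "finite_measure M" and c: "c \<in> M \<rightarrow>\<^sub>M count_space UNIV" and ic: "integrable M (\<lambda>x. Phi (c x))"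
    and \<A>: "\<A> \<subseteq> sets M" and approx: "\<And>A e. A \<in> sets M \<Longrightarrow> 0 < e \<Longrightarrow> \<exists>B\<in>\<A>. measure M ((A - B) \<union> (B - A)) < e"
    and "0 < e"
  obtains K \<beta> where "\<beta> \<in> {- int K..int K} \<rightarrow>\<^sub>E \<A>" and "(\<integral>x. Phi (c x - step_fun K \<beta> x) \<partial>M) < e"
proof -
  define tr where "tr K x = (if \<bar>c x\<bar> \<le> int K then c x else 0)" for K x
  obtain K where K: "(\<integral>x. Phi (c x - tr K x) \<partial>M) < e / 2"
    using order_tendstoD(2)[OF integral_Phi_truncation_tendsto_0[OF c ic], of "e / 2"] \<open>0 < e\<close>
    by (auto simp: eventually_sequentially tr_def)
  have "0 < e / 2" using \<open>0 < e\<close> by simp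
  then obtain \<beta> where \<beta>: "\<beta> \<in> {- int K..int K} \<rightarrow>\<^sub>E \<A>"
    and \<beta>_small: "(\<integral>x. Phi (tr K x - step_fun K \<beta> x) \<partial>M) < e / 2"
    using step_fun_approx_truncation[OF fin c \<A> approx, where K = K and e = "e / 2"] unfolding tr_def by blast
  have tr: "tr K \<in> M \<rightarrow>\<^sub>M count_space UNIV" unfolding tr_def by (rule measurable_countable1[OF c])
  have step: "step_fun K \<beta> \<in> M \<rightarrow>\<^sub>M count_space UNIV" using \<beta> \<A> by (intro measurable_step_fun) auto
  have int_tr: "integrable M (\<lambda>x. Phi (tr K x))"
    by (rule integrable_Phi_bounded[OF fin tr, where B = "int K"]) (simp add: tr_def)
  have int_step: "integrable M (\<lambda>x. Phi (step_fun K \<beta> x))"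
    by (rule integrable_Phi_bounded[OF fin step abs_step_fun_le])
  have "(\<integral>x. Phi (c x - step_fun K \<beta> x) \<partial>M) \<le> (\<integral>x. Phi (c x - tr K x) + Phi (tr K x - step_fun K \<beta> x) \<partial>M)"
    by (intro integral_mono Phi_triangle Bochner_Integration.integrable_add integrable_Phi_diff c tr step ic
        int_tr int_step)
  also have "\<dots> = (\<integral>x. Phi (c x - tr K x) \<partial>M) + (\<integral>x. Phi (tr K x - step_fun K \<beta> x) \<partial>M)"
    by (intro Bochner_Integration.integral_add integrable_Phi_diff c tr step ic int_tr int_step)
  finally show thesis using K \<beta>_small by (intro that[OF \<beta>]) simp
qed

end

locale full_group_phi_space = aperiodic_aut M T + metric_compatible_fun \<phi>
  for M :: "'a measure" and T :: "'a \<Rightarrow> 'a" and \<phi> :: "real \<Rightarrow> real"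
begin

abbreviation G\<^sub>\<phi> where "G\<^sub>\<phi> \<equiv> full_group_phi M \<phi> T"
abbreviation d\<^sub>\<phi> where "d\<^sub>\<phi> \<equiv> d_phi M \<phi> T"
abbreviation c\<^sub>T where "c\<^sub>T \<equiv> cocycle M T"

lemma integrable_Phi_cocycle_iff:
  assumes "U \<in> full_group M T" "is_cocycle M T U c"
  shows "integrable M (\<lambda>x. Phi (c\<^sub>T U x)) \<longleftrightarrow> integrable M (\<lambda>x. Phi (c x))"
  using assms measurable_cocycle AE_cocycle_eq[OF assms]
  by (intro integrable_cong_AE) (auto simp: is_cocycle_def intro: measurable_countable_real elim: AE_mp)

lemma mem_full_group_phi_iff_integrable:
  "U \<in> G\<^sub>\<phi> \<longleftrightarrow> U \<in> full_group M T \<and> integrable M (\<lambda>x. Phi (c\<^sub>T U x))"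
proof -
  have "U \<in> G\<^sub>\<phi> \<longleftrightarrow> U \<in> full_group M T \<and> (\<integral>\<^sup>+ x. ennreal (Phi (c\<^sub>T U x)) \<partial>M) < \<infinity>"
    by (simp only: full_group_phi_def Phi_def mem_Collect_eq)
  moreover have "integrable M (\<lambda>x. Phi (c\<^sub>T U x)) \<longleftrightarrow> (\<integral>\<^sup>+ x. ennreal (Phi (c\<^sub>T U x)) \<partial>M) < \<infinity>"
    if "U \<in> full_group M T"
    using measurable_countable_real[OF measurable_cocycle[OF that]]
    by (simp add: integrable_iff_bounded Phi_nonneg)
  ultimately show ?thesis by blast
qed

lemma full_group_phiD:
  assumes "U \<in> G\<^sub>\<phi>"
  shows "aut M U" and "U \<in> full_group M T" and "integrable M (\<lambda>x. Phi (c\<^sub>T U x))"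
  using assms by (simp_all add: mem_full_group_phi_iff_integrable full_group_def)

lemma full_group_phiI:
  assumes "aut M U" "is_cocycle M T U c" "integrable M (\<lambda>x. Phi (c x))" shows "U \<in> G\<^sub>\<phi>"
proof -
  have U: "U \<in> full_group M T" using assms(1,2) by (auto simp: full_group_def)
  then have "integrable M (\<lambda>x. Phi (c\<^sub>T U x))"
    using integrable_Phi_cocycle_iff[OF U assms(2)] assms(3) by blast
  with U show ?thesis by (simp add: mem_full_group_phi_iff_integrable)
qed

lemma measurable_cocycle_phi: "U \<in> G\<^sub>\<phi> \<Longrightarrow> c\<^sub>T U \<in> M \<rightarrow>\<^sub>M count_space UNIV"
  by (rule measurable_cocycle[OF full_group_phiD(2)])

lemma is_cocycle_cocycle_phi: "U \<in> G\<^sub>\<phi> \<Longrightarrow> is_cocycle M T U (c\<^sub>T U)"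
  by (rule is_cocycle_cocycle[OF full_group_phiD(2)])

lemma integrable_Phi_cocycle_diff:
  "U \<in> G\<^sub>\<phi> \<Longrightarrow> V \<in> G\<^sub>\<phi> \<Longrightarrow> integrable M (\<lambda>x. Phi (c\<^sub>T U x - c\<^sub>T V x))"
  by (intro integrable_Phi_diff measurable_cocycle_phi full_group_phiD(3))

lemma d_phi_eq: "d\<^sub>\<phi> U V = (\<integral>x. Phi (c\<^sub>T U x - c\<^sub>T V x) \<partial>M)"
  by (simp only: d_phi_def Phi_def)

lemma d_phi_eq_cocycles:
  assumes "U \<in> full_group M T" "V \<in> full_group M T" "is_cocycle M T U cu" "is_cocycle M T V cv"
  shows "d\<^sub>\<phi> U V = (\<integral>x. Phi (cu x - cv x) \<partial>M)"
  unfolding d_phi_eq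
proof (rule integral_cong_AE)
  show "(\<lambda>x. Phi (c\<^sub>T U x - c\<^sub>T V x)) \<in> borel_measurable M"
    by (rule measurable_countable_real2[OF measurable_cocycle[OF assms(1)] measurable_cocycle[OF assms(2)]])
  show "(\<lambda>x. Phi (cu x - cv x)) \<in> borel_measurable M"
    using assms(3,4) measurable_countable_real2[of cu M cv] by (simp add: is_cocycle_def)
  show "AE x in M. Phi (c\<^sub>T U x - c\<^sub>T V x) = Phi (cu x - cv x)"
    using AE_cocycle_eq[OF assms(1,3)] AE_cocycle_eq[OF assms(2,4)] by eventually_elim simp
qed

lemma id_mem_full_group_phi: "id \<in> G\<^sub>\<phi>"
  by (rule full_group_phiI[OF aut_id is_cocycle_id]) simp

lemma comp_mem_full_group_phi:
  assumes U: "U \<in> G\<^sub>\<phi>" and V: "V \<in> G\<^sub>\<phi>" shows "U \<circ> V \<in> G\<^sub>\<phi>"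
proof (rule full_group_phiI)
  note V_aut = full_group_phiD(1)[OF V]
  show "aut M (U \<circ> V)" using full_group_phiD(1)[OF U] V_aut by (rule aut_comp)
  show "is_cocycle M T (U \<circ> V) (\<lambda>x. c\<^sub>T U (V x) + c\<^sub>T V x)"
    using is_cocycle_cocycle_phi[OF U] is_cocycle_cocycle_phi[OF V] V_aut by (rule is_cocycle_comp)
  have "integrable M (\<lambda>x. Phi (c\<^sub>T U (V x)))"
    using full_group_phiD(3)[OF U] integrable_comp_aut[OF V_aut measurable_countable_real[OF measurable_cocycle_phi[OF U]]]
    by simp
  then show "integrable M (\<lambda>x. Phi (c\<^sub>T U (V x) + c\<^sub>T V x))"
    using measurable_compose[OF aut_measurable[OF V_aut] measurable_cocycle_phi[OF U]]
    by (intro integrable_Phi_add measurable_cocycle_phi[OF V] full_group_phiD(3)[OF V])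
qed

lemma inv_mem_full_group_phi:
  assumes U: "U \<in> G\<^sub>\<phi>" shows "inv U \<in> G\<^sub>\<phi>"
proof (rule full_group_phiI)
  note U_aut = full_group_phiD(1)[OF U]
  show "aut M (inv U)" using U_aut by (rule aut_inv)
  show "is_cocycle M T (inv U) (\<lambda>x. - c\<^sub>T U (inv U x))"
    using is_cocycle_cocycle_phi[OF U] U_aut by (rule is_cocycle_inv)
  show "integrable M (\<lambda>x. Phi (- c\<^sub>T U (inv U x)))"
    using full_group_phiD(3)[OF U]
      integrable_comp_aut[OF aut_inv[OF U_aut] measurable_countable_real[OF measurable_cocycle_phi[OF U]]]
    by simp
qed

lemma mem_full_group_phi_if_aut_eq:
  "U \<in> G\<^sub>\<phi> \<Longrightarrow> aut M V \<Longrightarrow> aut_eq M U V \<Longrightarrow> V \<in> G\<^sub>\<phi>"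
  by (rule full_group_phiI[OF _ is_cocycle_AE_cong[OF is_cocycle_cocycle_phi] full_group_phiD(3)])

lemma d_phi_nonneg: "0 \<le> d\<^sub>\<phi> U V"
  unfolding d_phi_eq by (simp add: Phi_nonneg)

lemma d_phi_commute: "d\<^sub>\<phi> U V = d\<^sub>\<phi> V U"
  unfolding d_phi_eq by (simp add: Phi_commute)

lemma d_phi_triangle:
  assumes "U \<in> G\<^sub>\<phi>" "V \<in> G\<^sub>\<phi>" "W \<in> G\<^sub>\<phi>" shows "d\<^sub>\<phi> U W \<le> d\<^sub>\<phi> U V + d\<^sub>\<phi> V W"
proof -
  have "d\<^sub>\<phi> U W \<le> (\<integral>x. Phi (c\<^sub>T U x - c\<^sub>T V x) + Phi (c\<^sub>T V x - c\<^sub>T W x) \<partial>M)"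
    unfolding d_phi_eq using assms
    by (intro integral_mono Phi_triangle Bochner_Integration.integrable_add integrable_Phi_cocycle_diff)
  also have "\<dots> = d\<^sub>\<phi> U V + d\<^sub>\<phi> V W"
    unfolding d_phi_eq using assms by (intro Bochner_Integration.integral_add integrable_Phi_cocycle_diff)
  finally show ?thesis .
qed

lemma d_phi_eq_0_iff:
  assumes U: "U \<in> G\<^sub>\<phi>" and V: "V \<in> G\<^sub>\<phi>" shows "d\<^sub>\<phi> U V = 0 \<longleftrightarrow> aut_eq M U V"
proof -
  have "d\<^sub>\<phi> U V = 0 \<longleftrightarrow> (AE x in M. Phi (c\<^sub>T U x - c\<^sub>T V x) = 0)"
    unfolding d_phi_eq using integrable_Phi_cocycle_diff[OF U V]
    by (intro integral_nonneg_eq_0_iff_AE) (simp_all add: Phi_nonneg)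
  also have "\<dots> \<longleftrightarrow> (AE x in M. c\<^sub>T U x = c\<^sub>T V x)" by simp
  also have "\<dots> \<longleftrightarrow> aut_eq M U V"
  proof
    assume "AE x in M. c\<^sub>T U x = c\<^sub>T V x"
    then show "aut_eq M U V"
      using AE_eq_tpow_cocycle[OF full_group_phiD(2)[OF U]] AE_eq_tpow_cocycle[OF full_group_phiD(2)[OF V]]
      unfolding aut_eq_def by eventually_elim simp
  next
    assume "aut_eq M U V"
    then show "AE x in M. c\<^sub>T U x = c\<^sub>T V x"
      using AE_cocycle_eq[OF full_group_phiD(2)[OF V] is_cocycle_AE_cong[OF is_cocycle_cocycle_phi[OF U]]]
      by (auto elim: AE_mp)
  qed
  finally show ?thesis .
qed

lemma d_phi_comp_right:
  assumes U: "U \<in> G\<^sub>\<phi>" and V: "V \<in> G\<^sub>\<phi>" and W: "W \<in> G\<^sub>\<phi>"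
  shows "d\<^sub>\<phi> (U \<circ> W) (V \<circ> W) = d\<^sub>\<phi> U V"
proof -
  note W_aut = full_group_phiD(1)[OF W]
  have "d\<^sub>\<phi> (U \<circ> W) (V \<circ> W) = (\<integral>x. Phi ((c\<^sub>T U (W x) + c\<^sub>T W x) - (c\<^sub>T V (W x) + c\<^sub>T W x)) \<partial>M)"
    by (rule d_phi_eq_cocycles[OF full_group_phiD(2)[OF comp_mem_full_group_phi[OF U W]]
          full_group_phiD(2)[OF comp_mem_full_group_phi[OF V W]]
          is_cocycle_comp[OF is_cocycle_cocycle_phi[OF U] is_cocycle_cocycle_phi[OF W] W_aut]
          is_cocycle_comp[OF is_cocycle_cocycle_phi[OF V] is_cocycle_cocycle_phi[OF W] W_aut]])
  then have "d\<^sub>\<phi> (U \<circ> W) (V \<circ> W) = (\<integral>x. Phi (c\<^sub>T U (W x) - c\<^sub>T V (W x)) \<partial>M)"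
    by simp
  moreover have "(\<lambda>x. Phi (c\<^sub>T U x - c\<^sub>T V x)) \<in> borel_measurable M"
    by (rule measurable_countable_real2[OF measurable_cocycle_phi[OF U] measurable_cocycle_phi[OF V]])
  ultimately show ?thesis
    unfolding d_phi_eq[of U V] using integral_comp_aut[OF W_aut] by simp
qed

subsection \<open>Completeness\<close>

lemma cocycle_neq_measure_le:
  assumes U: "U \<in> G\<^sub>\<phi>" and V: "V \<in> G\<^sub>\<phi>"
  shows "{x. c\<^sub>T U x \<noteq> c\<^sub>T V x} \<in> sets M"
    and "\<phi> 1 * measure M {x. c\<^sub>T U x \<noteq> c\<^sub>T V x} \<le> d\<^sub>\<phi> U V"
proof -
  show E: "{x. c\<^sub>T U x \<noteq> c\<^sub>T V x} \<in> sets M"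
    using sets_countable_pred2[OF measurable_cocycle_phi[OF U] measurable_cocycle_phi[OF V], of "(\<noteq>)"] by simp
  have "integrable M (indicator {x. c\<^sub>T U x \<noteq> c\<^sub>T V x} :: 'a \<Rightarrow> real)"
    using E by (intro integrable_real_indicator) (auto simp: less_top[symmetric])
  then have int: "integrable M (\<lambda>x. \<phi> 1 * indicator {x. c\<^sub>T U x \<noteq> c\<^sub>T V x} x)"
    by (rule Bochner_Integration.integrable_mult_right)
  have "\<phi> 1 * measure M {x. c\<^sub>T U x \<noteq> c\<^sub>T V x} = (\<integral>x. \<phi> 1 * indicator {x. c\<^sub>T U x \<noteq> c\<^sub>T V x} x \<partial>M)"
    using E by (simp add: emeasure_eq_measure)
  also have "\<dots> \<le> d\<^sub>\<phi> U V"
    unfolding d_phi_eq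
    by (rule integral_mono[OF int integrable_Phi_cocycle_diff[OF U V]])
       (auto simp: indicator_def Phi_nonneg phi_1_le_Phi)
  finally show "\<phi> 1 * measure M {x. c\<^sub>T U x \<noteq> c\<^sub>T V x} \<le> d\<^sub>\<phi> U V" .
qed

lemma neq_subset_cocycle_neq:
  assumes "U \<in> full_group M T" "V \<in> full_group M T"
  obtains N where "N \<in> null_sets M" "{x. U x \<noteq> V x} \<subseteq> {x. c\<^sub>T U x \<noteq> c\<^sub>T V x} \<union> N"
proof -
  have "AE x in M. U x = tpow T (c\<^sub>T U x) x \<and> V x = tpow T (c\<^sub>T V x) x"
    using AE_eq_tpow_cocycle[OF assms(1)] AE_eq_tpow_cocycle[OF assms(2)] by eventually_elim simp
  then obtain N where N: "{x \<in> space M. \<not> (U x = tpow T (c\<^sub>T U x) x \<and> V x = tpow T (c\<^sub>T V x) x)} \<subseteq> N"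
    "N \<in> null_sets M"
    by (rule AE_E) auto
  have "{x. U x \<noteq> V x} \<subseteq> {x. c\<^sub>T U x \<noteq> c\<^sub>T V x} \<union> N" using N(1) by force
  with N(2) show thesis by (rule that)
qed

lemma AE_eventually_eq_of_summable_d_phi:
  assumes s: "\<And>k. s k \<in> G\<^sub>\<phi>" and summable: "summable (\<lambda>k. d\<^sub>\<phi> (s k) (s (Suc k)))"
  shows "AE x in M. eventually (\<lambda>k. s k x = s (Suc k) x \<and> inv (s k) x = inv (s (Suc k)) x) sequentially"
proof -
  define E where "E k = {x. c\<^sub>T (s k) x \<noteq> c\<^sub>T (s (Suc k)) x}" for k
  have "\<exists>N. N \<in> null_sets M \<and> {x. s k x \<noteq> s (Suc k) x} \<subseteq> E k \<union> N" for k
    unfolding E_def using full_group_phiD(2)[OF s] by (metis neq_subset_cocycle_neq)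
  then obtain N where N: "\<And>k. N k \<in> null_sets M" "\<And>k. {x. s k x \<noteq> s (Suc k) x} \<subseteq> E k \<union> N k"
    by metis
  have E: "E k \<in> sets M" for k
    unfolding E_def by (rule cocycle_neq_measure_le(1)[OF s s])
  have "measure M (E k \<union> N k) \<le> d\<^sub>\<phi> (s k) (s (Suc k)) / \<phi> 1" for k
    using measure_Un_null_set[OF E N(1)] cocycle_neq_measure_le(2)[OF s s, of k "Suc k"] phi_1_pos
    by (simp add: E_def field_simps)
  then have "summable (\<lambda>k. measure M (E k \<union> N k))"
    by (intro summable_comparison_test[OF _ summable_divide[OF summable]]) auto
  then show ?thesis
    using E N by (intro AE_eventually_eq_and_inv_eq[OF full_group_phiD(1)[OF s]]) auto
qed

lemma d_phi_le_of_AE_eventually_cocycle: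
  assumes S: "S \<in> G\<^sub>\<phi>" and s: "\<And>j. s j \<in> G\<^sub>\<phi>"
    and U: "U \<in> full_group M T" "is_cocycle M T U C"
    and lim: "AE x in M. eventually (\<lambda>j. c\<^sub>T (s j) x = C x) sequentially"
    and bound: "eventually (\<lambda>j. d\<^sub>\<phi> S (s j) \<le> r) sequentially"
  shows "integrable M (\<lambda>x. Phi (c\<^sub>T S x - C x))" and "d\<^sub>\<phi> S U \<le> r"
proof -
  define u where "u j x = ennreal (Phi (c\<^sub>T S x - c\<^sub>T (s j) x))" for j x
  have C: "C \<in> M \<rightarrow>\<^sub>M count_space UNIV" using U(2) by (simp add: is_cocycle_def)
  have meas: "(\<lambda>x. Phi (c\<^sub>T S x - C x)) \<in> borel_measurable M"
    by (rule measurable_countable_real2[OF measurable_cocycle_phi[OF S] C])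
  have u: "u j \<in> borel_measurable M" for j
    unfolding u_def using measurable_countable_real2[OF measurable_cocycle_phi[OF S] measurable_cocycle_phi[OF s],
      of "\<lambda>a b. Phi (a - b)"] by measurable
  have "AE x in M. ennreal (Phi (c\<^sub>T S x - C x)) = liminf (\<lambda>j. u j x)"
    using lim
  proof eventually_elim
    case (elim x)
    then have "eventually (\<lambda>j. u j x = ennreal (Phi (c\<^sub>T S x - C x))) sequentially"
      by eventually_elim (simp add: u_def)
    then show ?case by (intro lim_imp_Liminf[symmetric] tendsto_eventually) auto
  qed
  then have "(\<integral>\<^sup>+x. ennreal (Phi (c\<^sub>T S x - C x)) \<partial>M) = (\<integral>\<^sup>+x. liminf (\<lambda>j. u j x) \<partial>M)"
    by (rule nn_integral_cong_AE)
  also have "\<dots> \<le> liminf (\<lambda>j. integral\<^sup>N M (u j))"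
    using u by (rule nn_integral_liminf)
  also have "(\<lambda>j. integral\<^sup>N M (u j)) = (\<lambda>j. ennreal (d\<^sub>\<phi> S (s j)))"
    unfolding u_def d_phi_eq
    by (intro ext nn_integral_eq_integral[OF integrable_Phi_cocycle_diff[OF S s]]) (simp add: Phi_nonneg)
  also have "liminf (\<lambda>j. ennreal (d\<^sub>\<phi> S (s j))) \<le> ennreal r"
    using bound by (intro Liminf_le) (auto elim!: eventually_mono intro: ennreal_leI)
  finally have le: "(\<integral>\<^sup>+x. ennreal (Phi (c\<^sub>T S x - C x)) \<partial>M) \<le> ennreal r" .
  then show int: "integrable M (\<lambda>x. Phi (c\<^sub>T S x - C x))"
    using meas by (auto simp: integrable_iff_bounded Phi_nonneg intro: le_less_trans)
  have "d\<^sub>\<phi> S U = (\<integral>x. Phi (c\<^sub>T S x - C x) \<partial>M)"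
    by (rule d_phi_eq_cocycles[OF full_group_phiD(2)[OF S] U(1) is_cocycle_cocycle_phi[OF S] U(2)])
  moreover have "ennreal (\<integral>x. Phi (c\<^sub>T S x - C x) \<partial>M) \<le> ennreal r"
    using le nn_integral_eq_integral[OF int] by (simp add: Phi_nonneg)
  moreover obtain j where "d\<^sub>\<phi> S (s j) \<le> r" using bound by (auto simp: eventually_sequentially)
  then have "0 \<le> r" using d_phi_nonneg order_trans by blast
  ultimately show "d\<^sub>\<phi> S U \<le> r" by simp
qed

lemma complete_full_group_phi:
  assumes S: "\<And>n. S n \<in> G\<^sub>\<phi>" and Cauchy: "\<forall>e>0. \<exists>N. \<forall>m\<ge>N. \<forall>n\<ge>N. d\<^sub>\<phi> (S m) (S n) < e"
  shows "\<exists>U\<in>G\<^sub>\<phi>. (\<lambda>n. d\<^sub>\<phi> (S n) U) \<longlonglongrightarrow> 0"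
proof -
  obtain \<sigma> where \<sigma>: "\<And>k m n. \<sigma> k \<le> m \<Longrightarrow> \<sigma> k \<le> n \<Longrightarrow> d\<^sub>\<phi> (S m) (S n) < (1/2)^k" and "mono \<sigma>"
    using Cauchy_subseq_geometric[OF Cauchy] by blast
  define s where "s k = S (\<sigma> k)" for k
  have s: "s k \<in> G\<^sub>\<phi>" for k by (simp add: s_def S)
  have "d\<^sub>\<phi> (s k) (s (Suc k)) \<le> (1/2)^k" for k
    using \<sigma>[of k "\<sigma> k" "\<sigma> (Suc k)"] monoD[OF \<open>mono \<sigma>\<close>, of k "Suc k"] by (simp add: s_def)
  then have "summable (\<lambda>k. d\<^sub>\<phi> (s k) (s (Suc k)))"
    by (intro summable_comparison_test[OF _ summable_geometric[of "1/2"]]) (auto simp: d_phi_nonneg)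
  then obtain U C where U: "aut M U" "is_cocycle M T U C"
    and lim: "AE x in M. eventually (\<lambda>k. c\<^sub>T (s k) x = C x) sequentially"
    by (rule limit_in_full_group[OF full_group_phiD(2)[OF s] AE_eventually_eq_of_summable_d_phi[OF s]])
  have U_fg: "U \<in> full_group M T" using U by (auto simp: full_group_def)
  have tail: "d\<^sub>\<phi> (S n) U \<le> (1/2)^m" "integrable M (\<lambda>x. Phi (c\<^sub>T (S n) x - C x))"
    if "\<sigma> m \<le> n" for m n
  proof -
    have "eventually (\<lambda>j. d\<^sub>\<phi> (S n) (s j) \<le> (1/2)^m) sequentially"
      unfolding eventually_sequentially s_def
      using that \<sigma>[of m n] monoD[OF \<open>mono \<sigma>\<close>] by (metis less_imp_le order_trans)
    then show "d\<^sub>\<phi> (S n) U \<le> (1/2)^m" "integrable M (\<lambda>x. Phi (c\<^sub>T (S n) x - C x))"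
      using d_phi_le_of_AE_eventually_cocycle[OF S s U_fg U(2) lim] by blast+
  qed
  \<comment> \<open>\<open>C\<close> differs from the integrable cocycle of \<open>S (\<sigma> 0)\<close> by an integrable amount\<close>
  have "integrable M (\<lambda>x. Phi ((C x - c\<^sub>T (S (\<sigma> 0)) x) + c\<^sub>T (S (\<sigma> 0)) x))"
    using tail(2)[OF order_refl] U(2) measurable_cocycle_phi[OF S] full_group_phiD(3)[OF S]
      integrable_Phi_add[of "\<lambda>x. C x - c\<^sub>T (S (\<sigma> 0)) x" M "c\<^sub>T (S (\<sigma> 0))"]
      measurable_countable2[of C M "c\<^sub>T (S (\<sigma> 0))" "(-)"]
    by (simp add: is_cocycle_def Phi_commute)
  then have "U \<in> G\<^sub>\<phi>" using U by (intro full_group_phiI) auto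
  moreover have "(\<lambda>n. d\<^sub>\<phi> (S n) U) \<longlonglongrightarrow> 0"
  proof (rule LIMSEQ_I)
    fix r :: real assume "0 < r"
    then obtain m where "(1/2::real)^m < r" using real_arch_pow_inv[of r "1/2"] by auto
    then show "\<exists>N. \<forall>n\<ge>N. norm (d\<^sub>\<phi> (S n) U - 0) < r"
      using tail(1) d_phi_nonneg by (intro exI[of _ "\<sigma> m"]) (auto intro: le_less_trans)
  qed
  ultimately show ?thesis by blast
qed

subsection \<open>Continuity of the group operations\<close>

lemma (in finite_measure) integral_excess_tendsto_0:
  fixes f :: "'a \<Rightarrow> real"
  assumes f: "integrable M f" and nonneg: "\<And>x. 0 \<le> f x"
  shows "(\<lambda>K::nat. \<integral>x. f x - min (f x) (real K) \<partial>M) \<longlonglongrightarrow> 0"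
proof -
  have [measurable]: "f \<in> borel_measurable M" using f by simp
  have "(\<lambda>K::nat. \<integral>x. f x - min (f x) (real K) \<partial>M) \<longlonglongrightarrow> (\<integral>x. 0 \<partial>M)"
  proof (rule integral_dominated_convergence[where w = f])
    show "AE x in M. (\<lambda>K. f x - min (f x) (real K)) \<longlonglongrightarrow> 0"
    proof (rule AE_I2)
      fix x
      have "eventually (\<lambda>K. f x - min (f x) (real K) = 0) sequentially"
        unfolding eventually_sequentially by (rule exI[of _ "nat \<lceil>f x\<rceil>"]) linarith
      then show "(\<lambda>K. f x - min (f x) (real K)) \<longlonglongrightarrow> 0" by (rule tendsto_eventually)
    qed
    show "AE x in M. norm (f x - min (f x) (real K)) \<le> f x" for K
      using nonneg by (auto simp: min_def)
  qed (simp_all add: f)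
  then show ?thesis by simp
qed

lemma (in finite_measure) integral_indicator_tendsto_0:
  fixes f :: "'a \<Rightarrow> real"
  assumes f: "integrable M f" and nonneg: "\<And>x. 0 \<le> f x"
    and A: "\<And>n. A n \<in> sets M" and small: "(\<lambda>n. measure M (A n)) \<longlonglongrightarrow> 0"
  shows "(\<lambda>n. \<integral>x. f x * indicator (A n) x \<partial>M) \<longlonglongrightarrow> 0"
proof (rule LIMSEQ_I)
  fix r :: real assume "0 < r"
  obtain K :: nat where K: "(\<integral>x. f x - min (f x) (real K) \<partial>M) < r / 2"
    using order_tendstoD(2)[OF integral_excess_tendsto_0[OF f nonneg], of "r / 2"] \<open>0 < r\<close>
    by (auto simp: eventually_sequentially)
  obtain N where N: "\<And>n. N \<le> n \<Longrightarrow> measure M (A n) < r / (2 * (real K + 1))"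
    using order_tendstoD(2)[OF small, of "r / (2 * (real K + 1))"] \<open>0 < r\<close>
    by (auto simp: eventually_sequentially)
  have "\<bar>\<integral>x. f x * indicator (A n) x \<partial>M\<bar> < r" if "N \<le> n" for n
  proof -
    have int: "integrable M (\<lambda>x. f x - min (f x) (real K))"
      using f nonneg by (intro Bochner_Integration.integrable_bound[OF f]) (auto simp: min_def)
    have int_A: "integrable M (\<lambda>x. real K * indicator (A n) x)"
      using A[of n] by (intro integrable_real_mult_indicator) auto
    have "(\<integral>x. f x * indicator (A n) x \<partial>M)
        \<le> (\<integral>x. (f x - min (f x) (real K)) + real K * indicator (A n) x \<partial>M)"
      by (rule integral_mono[OF integrable_real_mult_indicator[OF A f] Bochner_Integration.integrable_add[OF int int_A]])
         (use nonneg in \<open>auto simp: indicator_def min_def\<close>)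
    also have "\<dots> = (\<integral>x. f x - min (f x) (real K) \<partial>M) + real K * measure M (A n)"
      using A[of n] int int_A by simp
    also have "real K * measure M (A n) \<le> real K * (r / (2 * (real K + 1)))"
      using N[OF that] by (intro mult_left_mono) auto
    also have "real K * (r / (2 * (real K + 1))) \<le> r / 2"
      using \<open>0 < r\<close> by (simp add: field_simps)
    finally show ?thesis
      using K nonneg by (simp add: abs_of_nonneg)
  qed
  then show "\<exists>N. \<forall>n\<ge>N. norm ((\<integral>x. f x * indicator (A n) x \<partial>M) - 0) < r" by auto
qed

lemma integral_Phi_cocycle_comp_indicator:
  assumes U: "U \<in> G\<^sub>\<phi>" and W: "aut M W" and E: "E \<in> sets M"
  shows "(\<integral>x. Phi (c\<^sub>T U (W x)) * indicator E x \<partial>M) = (\<integral>y. Phi (c\<^sub>T U y) * indicator (W ` E) y \<partial>M)"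
proof -
  have "indicator E x = (indicator (W ` E) (W x) :: real)" for x
    using aut_bij[OF W] by (auto simp: indicator_def bij_is_inj inj_image_mem_iff)
  then show ?thesis
    using integral_comp_aut[OF W, of "\<lambda>y. Phi (c\<^sub>T U y) * indicator (W ` E) y"]
      image_aut(1)[OF W E] measurable_countable_real[OF measurable_cocycle_phi[OF U]]
    by simp
qed

lemma measure_cocycle_neq_tendsto_0:
  assumes R: "\<And>n. R n \<in> G\<^sub>\<phi>" and V: "V \<in> G\<^sub>\<phi>" and lim: "(\<lambda>n. d\<^sub>\<phi> (R n) V) \<longlonglongrightarrow> 0"
  shows "(\<lambda>n. measure M {x. c\<^sub>T (R n) x \<noteq> c\<^sub>T V x}) \<longlonglongrightarrow> 0"
proof (rule tendsto_sandwich[where f = "\<lambda>n. 0" and h = "\<lambda>n. d\<^sub>\<phi> (R n) V / \<phi> 1"])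
  show "eventually (\<lambda>n. measure M {x. c\<^sub>T (R n) x \<noteq> c\<^sub>T V x} \<le> d\<^sub>\<phi> (R n) V / \<phi> 1) sequentially"
    using cocycle_neq_measure_le(2)[OF R V] phi_1_pos by (simp add: field_simps mult.commute)
  show "(\<lambda>n. d\<^sub>\<phi> (R n) V / \<phi> 1) \<longlonglongrightarrow> 0"
    using tendsto_divide_zero[OF lim] by simp
qed auto

lemma Phi_cocycle_comp_left_le:
  assumes R: "R \<in> G\<^sub>\<phi>" and V: "V \<in> G\<^sub>\<phi>"
  shows "AE x in M. Phi ((c\<^sub>T U (R x) + c\<^sub>T R x) - (c\<^sub>T U (V x) + c\<^sub>T V x))
    \<le> Phi (c\<^sub>T U (R x)) * indicator {x. c\<^sub>T R x \<noteq> c\<^sub>T V x} x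
      + Phi (c\<^sub>T U (V x)) * indicator {x. c\<^sub>T R x \<noteq> c\<^sub>T V x} x + Phi (c\<^sub>T R x - c\<^sub>T V x)"
  using AE_eq_tpow_cocycle[OF full_group_phiD(2)[OF R]] AE_eq_tpow_cocycle[OF full_group_phiD(2)[OF V]]
proof eventually_elim
  case (elim x)
  show ?case
  proof (cases "c\<^sub>T R x = c\<^sub>T V x")
    case True
    then have "R x = V x" using elim by simp
    with True show ?thesis by (simp add: Phi_nonneg)
  next
    case False
    have "Phi ((c\<^sub>T U (R x) + c\<^sub>T R x) - (c\<^sub>T U (V x) + c\<^sub>T V x))
        \<le> Phi (c\<^sub>T U (R x) - c\<^sub>T U (V x)) + Phi (c\<^sub>T R x - c\<^sub>T V x)"
      using Phi_add[of "c\<^sub>T U (R x) - c\<^sub>T U (V x)" "c\<^sub>T R x - c\<^sub>T V x"] by (simp add: algebra_simps)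
    moreover have "Phi (c\<^sub>T U (R x) - c\<^sub>T U (V x)) \<le> Phi (c\<^sub>T U (R x)) + Phi (c\<^sub>T U (V x))"
      by (rule Phi_diff)
    moreover have "indicator {x. c\<^sub>T R x \<noteq> c\<^sub>T V x} x = (1::real)" using False by simp
    ultimately show ?thesis by (simp only: mult_1_right)
  qed
qed

lemma d_phi_comp_left_le:
  assumes U: "U \<in> G\<^sub>\<phi>" and R: "R \<in> G\<^sub>\<phi>" and V: "V \<in> G\<^sub>\<phi>"
  defines "E \<equiv> {x. c\<^sub>T R x \<noteq> c\<^sub>T V x}"
  shows "d\<^sub>\<phi> (U \<circ> R) (U \<circ> V) \<le> (\<integral>y. Phi (c\<^sub>T U y) * indicator (R ` E) y \<partial>M)
    + (\<integral>y. Phi (c\<^sub>T U y) * indicator (V ` E) y \<partial>M) + d\<^sub>\<phi> R V"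
proof -
  note R_aut = full_group_phiD(1)[OF R] and V_aut = full_group_phiD(1)[OF V]
  have E: "E \<in> sets M" unfolding E_def by (rule cocycle_neq_measure_le(1)[OF R V])
  have int: "integrable M (\<lambda>x. Phi (c\<^sub>T U (W x)) * indicator E x)" if "aut M W" for W
    using integrable_comp_aut[OF that measurable_countable_real[OF measurable_cocycle_phi[OF U]]]
      full_group_phiD(3)[OF U] by (intro integrable_real_mult_indicator[OF E]) auto
  have "d\<^sub>\<phi> (U \<circ> R) (U \<circ> V) = (\<integral>x. Phi ((c\<^sub>T U (R x) + c\<^sub>T R x) - (c\<^sub>T U (V x) + c\<^sub>T V x)) \<partial>M)"
    by (rule d_phi_eq_cocycles[OF full_group_phiD(2)[OF comp_mem_full_group_phi[OF U R]]
          full_group_phiD(2)[OF comp_mem_full_group_phi[OF U V]]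
          is_cocycle_comp[OF is_cocycle_cocycle_phi[OF U] is_cocycle_cocycle_phi[OF R] R_aut]
          is_cocycle_comp[OF is_cocycle_cocycle_phi[OF U] is_cocycle_cocycle_phi[OF V] V_aut]])
  also have "\<dots> \<le> (\<integral>x. Phi (c\<^sub>T U (R x)) * indicator E x + Phi (c\<^sub>T U (V x)) * indicator E x
      + Phi (c\<^sub>T R x - c\<^sub>T V x) \<partial>M)"
    using Phi_cocycle_comp_left_le[OF R V, of U] unfolding E_def[symmetric]
    by (rule integral_mono_AE'[OF Bochner_Integration.integrable_add[OF
        Bochner_Integration.integrable_add[OF int[OF R_aut] int[OF V_aut]] integrable_Phi_cocycle_diff[OF R V]]])
       (auto simp: Phi_nonneg)
  also have "\<dots> = (\<integral>y. Phi (c\<^sub>T U y) * indicator (R ` E) y \<partial>M)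
      + (\<integral>y. Phi (c\<^sub>T U y) * indicator (V ` E) y \<partial>M) + d\<^sub>\<phi> R V"
    using int[OF R_aut] int[OF V_aut] integrable_Phi_cocycle_diff[OF R V]
    by (simp add: d_phi_eq integral_Phi_cocycle_comp_indicator[OF U R_aut E]
        integral_Phi_cocycle_comp_indicator[OF U V_aut E])
  finally show ?thesis .
qed

lemma tendsto_d_phi_comp_left:
  assumes U: "U \<in> G\<^sub>\<phi>" and V: "V \<in> G\<^sub>\<phi>" and R: "\<And>n. R n \<in> G\<^sub>\<phi>"
    and lim: "(\<lambda>n. d\<^sub>\<phi> (R n) V) \<longlonglongrightarrow> 0"
  shows "(\<lambda>n. d\<^sub>\<phi> (U \<circ> R n) (U \<circ> V)) \<longlonglongrightarrow> 0"
proof -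
  define E where "E n = {x. c\<^sub>T (R n) x \<noteq> c\<^sub>T V x}" for n
  have E: "E n \<in> sets M" for n
    unfolding E_def by (rule cocycle_neq_measure_le(1)[OF R V])
  define f where "f W n = (\<integral>y. Phi (c\<^sub>T U y) * indicator (W n ` E n) y \<partial>M)" for W n
  have f: "f W \<longlonglongrightarrow> 0" if W: "\<And>n. aut M (W n)" for W
  proof -
    have "(\<lambda>n. measure M (W n ` E n)) \<longlonglongrightarrow> 0"
      using measure_cocycle_neq_tendsto_0[OF R V lim] image_aut(2)[OF W E] by (simp add: E_def)
    then show ?thesis
      unfolding f_def by (rule integral_indicator_tendsto_0[OF full_group_phiD(3)[OF U] Phi_nonneg image_aut(1)[OF W E]])
  qed
  have bound: "d\<^sub>\<phi> (U \<circ> R n) (U \<circ> V) \<le> f R n + f (\<lambda>_. V) n + d\<^sub>\<phi> (R n) V" for n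
    using d_phi_comp_left_le[OF U R V] by (simp add: f_def E_def)
  have "(\<lambda>n. f R n + f (\<lambda>_. V) n + d\<^sub>\<phi> (R n) V) \<longlonglongrightarrow> 0"
    using tendsto_add[OF tendsto_add[OF f f] lim] full_group_phiD(1)[OF R] full_group_phiD(1)[OF V] by simp
  then show ?thesis
    by (rule tendsto_sandwich[rotated 3]) (use bound d_phi_nonneg in auto)
qed

lemma tendsto_d_phi_comp:
  assumes S: "\<And>n. S n \<in> G\<^sub>\<phi>" and R: "\<And>n. R n \<in> G\<^sub>\<phi>" and U: "U \<in> G\<^sub>\<phi>" and V: "V \<in> G\<^sub>\<phi>"
    and lim_S: "(\<lambda>n. d\<^sub>\<phi> (S n) U) \<longlonglongrightarrow> 0" and lim_R: "(\<lambda>n. d\<^sub>\<phi> (R n) V) \<longlonglongrightarrow> 0"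
  shows "(\<lambda>n. d\<^sub>\<phi> (S n \<circ> R n) (U \<circ> V)) \<longlonglongrightarrow> 0"
proof (rule tendsto_sandwich[where f = "\<lambda>n. 0" and h = "\<lambda>n. d\<^sub>\<phi> (S n) U + d\<^sub>\<phi> (U \<circ> R n) (U \<circ> V)"])
  have "d\<^sub>\<phi> (S n \<circ> R n) (U \<circ> V) \<le> d\<^sub>\<phi> (S n \<circ> R n) (U \<circ> R n) + d\<^sub>\<phi> (U \<circ> R n) (U \<circ> V)" for n
    using S R U V by (intro d_phi_triangle comp_mem_full_group_phi)
  then show "eventually (\<lambda>n. d\<^sub>\<phi> (S n \<circ> R n) (U \<circ> V) \<le> d\<^sub>\<phi> (S n) U + d\<^sub>\<phi> (U \<circ> R n) (U \<circ> V)) sequentially"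
    by (simp add: d_phi_comp_right[OF S U R])
  show "(\<lambda>n. d\<^sub>\<phi> (S n) U + d\<^sub>\<phi> (U \<circ> R n) (U \<circ> V)) \<longlonglongrightarrow> 0"
    using tendsto_add[OF lim_S tendsto_d_phi_comp_left[OF U V R lim_R]] by simp
qed (auto simp: d_phi_nonneg)

lemma tendsto_d_phi_inv:
  assumes S: "\<And>n. S n \<in> G\<^sub>\<phi>" and U: "U \<in> G\<^sub>\<phi>" and lim: "(\<lambda>n. d\<^sub>\<phi> (S n) U) \<longlonglongrightarrow> 0"
  shows "(\<lambda>n. d\<^sub>\<phi> (inv (S n)) (inv U)) \<longlonglongrightarrow> 0"
proof -
  \<comment> \<open>right invariance turns inversion into left translation by \<open>inv U\<close>\<close>
  have "d\<^sub>\<phi> (inv (S n)) (inv U) = d\<^sub>\<phi> (inv U \<circ> S n) (inv U \<circ> U)" for n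
  proof -
    have "d\<^sub>\<phi> (inv (S n)) (inv U) = d\<^sub>\<phi> (inv (S n) \<circ> S n) (inv U \<circ> S n)"
      by (rule d_phi_comp_right[OF inv_mem_full_group_phi[OF S] inv_mem_full_group_phi[OF U] S, symmetric])
    also have "inv (S n) \<circ> S n = inv U \<circ> U"
      using aut_bij[OF full_group_phiD(1)[OF S]] aut_bij[OF full_group_phiD(1)[OF U]] by (simp add: bij_is_inj)
    also have "d\<^sub>\<phi> (inv U \<circ> U) (inv U \<circ> S n) = d\<^sub>\<phi> (inv U \<circ> S n) (inv U \<circ> U)"
      by (rule d_phi_commute)
    finally show ?thesis .
  qed
  then show ?thesis
    using tendsto_d_phi_comp_left[OF inv_mem_full_group_phi[OF U] U S lim] by simp
qed

subsection \<open>Separability\<close>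

lemma separable_full_group_phi:
  assumes "separable_measure M"
  shows "\<exists>D\<subseteq>G\<^sub>\<phi>. countable D \<and> (\<forall>U\<in>G\<^sub>\<phi>. \<forall>e>0. \<exists>V\<in>D. d\<^sub>\<phi> U V < e)"
proof -
  obtain \<A> where \<A>: "countable \<A>" "\<A> \<subseteq> sets M"
    and approx: "\<And>A e. A \<in> sets M \<Longrightarrow> 0 < e \<Longrightarrow> \<exists>B\<in>\<A>. measure M ((A - B) \<union> (B - A)) < e"
    using assms unfolding separable_measure_def by blast
  have fin: "finite_measure M" by (rule finite_measureI) (simp add: emeasure_space_1)
  define F where "F = (\<Union>K. step_fun K ` ({- int K..int K} \<rightarrow>\<^sub>E \<A>))"
  have F: "f \<in> M \<rightarrow>\<^sub>M count_space UNIV" "integrable M (\<lambda>x. Phi (f x))" if "f \<in> F" for f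
  proof -
    from that obtain K \<beta> where f: "f = step_fun K \<beta>" and \<beta>: "\<beta> \<in> {- int K..int K} \<rightarrow>\<^sub>E \<A>"
      unfolding F_def by blast
    have "step_fun K \<beta> \<in> M \<rightarrow>\<^sub>M count_space UNIV" using \<beta> \<A>(2) by (intro measurable_step_fun) auto
    then show "f \<in> M \<rightarrow>\<^sub>M count_space UNIV" "integrable M (\<lambda>x. Phi (f x))"
      using integrable_Phi_bounded[OF fin _ abs_step_fun_le] f by auto
  qed
  show ?thesis
  proof (rule ex_countable_dense_subset[where \<rho> = "\<lambda>U f. \<integral>x. Phi (c\<^sub>T U x - f x) \<partial>M"])
    show "countable F"
      unfolding F_def using \<A>(1) by (intro countable_UN countable_image countable_PiE) auto
    show "\<exists>f\<in>F. (\<integral>x. Phi (c\<^sub>T U x - f x) \<partial>M) < e" if U: "U \<in> G\<^sub>\<phi>" and "0 < e" for U e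
    proof -
      obtain K \<beta> where "\<beta> \<in> {- int K..int K} \<rightarrow>\<^sub>E \<A>" "(\<integral>x. Phi (c\<^sub>T U x - step_fun K \<beta> x) \<partial>M) < e"
        by (rule step_fun_approx[OF fin measurable_cocycle_phi[OF U] full_group_phiD(3)[OF U] \<A>(2) approx \<open>0 < e\<close>])
      then show ?thesis unfolding F_def by blast
    qed
    show "d\<^sub>\<phi> U V \<le> (\<integral>x. Phi (c\<^sub>T U x - f x) \<partial>M) + (\<integral>x. Phi (c\<^sub>T V x - f x) \<partial>M)"
      if U: "U \<in> G\<^sub>\<phi>" and V: "V \<in> G\<^sub>\<phi>" and f: "f \<in> F" for U V f
    proof -
      have int: "integrable M (\<lambda>x. Phi (c\<^sub>T W x - f x))" if "W \<in> G\<^sub>\<phi>" for W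
        using that F[OF f] by (intro integrable_Phi_diff measurable_cocycle_phi full_group_phiD(3))
      have "d\<^sub>\<phi> U V \<le> (\<integral>x. Phi (c\<^sub>T U x - f x) + Phi (c\<^sub>T V x - f x) \<partial>M)"
        unfolding d_phi_eq
        by (rule integral_mono[OF integrable_Phi_cocycle_diff[OF U V] Bochner_Integration.integrable_add[OF int[OF U] int[OF V]]])
           (metis Phi_commute Phi_triangle)
      also have "\<dots> = (\<integral>x. Phi (c\<^sub>T U x - f x) \<partial>M) + (\<integral>x. Phi (c\<^sub>T V x - f x) \<partial>M)"
        by (rule Bochner_Integration.integral_add[OF int[OF U] int[OF V]])
      finally show ?thesis .
    qed
  qed
qed

end

theorem mainTheorem9:
  fixes M :: "'a::polish_space measure" and \<phi> :: "real \<Rightarrow> real" and T :: "'a \<Rightarrow> 'a"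
  assumes "std_atomless_prob M"
    and "metric_compatible \<phi>"
    and "aut M T" and "aperiodic M T"
  defines "G \<equiv> full_group_phi M \<phi> T" and "d \<equiv> d_phi M \<phi> T"
  shows
    \<comment> \<open>subgroup of Aut(X,mu)\<close>
    "(\<forall>U\<in>G. aut M U) \<and> id \<in> G \<and> (\<forall>U\<in>G. \<forall>V\<in>G. U \<circ> V \<in> G) \<and> (\<forall>U\<in>G. inv U \<in> G)
    \<comment> \<open>membership depends only on the class modulo null sets\<close>
    \<and> (\<forall>U\<in>G. \<forall>V. aut M V \<and> aut_eq M U V \<longrightarrow> V \<in> G)
    \<comment> \<open>d is a metric on G modulo null sets\<close>
    \<and> (\<forall>U\<in>G. \<forall>V\<in>G. d U V \<ge> 0 \<and> (d U V = 0 \<longleftrightarrow> aut_eq M U V) \<and> d U V = d V U)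
    \<and> (\<forall>U\<in>G. \<forall>V\<in>G. \<forall>W\<in>G. d U W \<le> d U V + d V W)
    \<comment> \<open>right invariance\<close>
    \<and> (\<forall>U\<in>G. \<forall>V\<in>G. \<forall>W\<in>G. d (U \<circ> W) (V \<circ> W) = d U V)
    \<comment> \<open>completeness\<close>
    \<and> (\<forall>S. (\<forall>n. S n \<in> G) \<and> (\<forall>e>0. \<exists>N. \<forall>m\<ge>N. \<forall>n\<ge>N. d (S m) (S n) < e)
          \<longrightarrow> (\<exists>U\<in>G. (\<lambda>n. d (S n) U) \<longlonglongrightarrow> 0))
    \<comment> \<open>separability\<close>
    \<and> (\<exists>D\<subseteq>G. countable D \<and> (\<forall>U\<in>G. \<forall>e>0. \<exists>V\<in>D. d U V < e))
    \<comment> \<open>group topology: multiplication and inversion are (sequentially) continuous\<close>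
    \<and> (\<forall>S R U V. (\<forall>n. S n \<in> G \<and> R n \<in> G) \<and> U \<in> G \<and> V \<in> G
          \<and> (\<lambda>n. d (S n) U) \<longlonglongrightarrow> 0 \<and> (\<lambda>n. d (R n) V) \<longlonglongrightarrow> 0
          \<longrightarrow> (\<lambda>n. d (S n \<circ> R n) (U \<circ> V)) \<longlonglongrightarrow> 0 \<and> (\<lambda>n. d (inv (S n)) (inv U)) \<longlonglongrightarrow> 0)"
proof -
  have prob: "prob_space M" and sets: "sets M = sets borel"
    using assms(1) by (simp_all add: std_atomless_prob_def)
  interpret full_group_phi_space M T \<phi>
    using prob assms(2-4) sets_eq_imp_space_eq[OF sets]
    by (simp add: full_group_phi_space_def aperiodic_aut_def aperiodic_aut_axioms_def metric_compatible_fun_def)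
  have "separable_measure M"
    using sets by (rule separable_measure_borel) (simp add: emeasure_space_1)
  then show ?thesis
    unfolding G_def d_def
    by (intro conjI ballI allI impI; (elim conjE)?)
       (auto intro: full_group_phiD(1) id_mem_full_group_phi comp_mem_full_group_phi inv_mem_full_group_phi
          mem_full_group_phi_if_aut_eq d_phi_nonneg d_phi_commute d_phi_triangle d_phi_comp_right
          complete_full_group_phi separable_full_group_phi tendsto_d_phi_comp tendsto_d_phi_inv
        simp: d_phi_eq_0_iff)
qed

end
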